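(* Let $G$ be a finite solvable group such that every maximal subgroup of $G$ is either $2$-nilpotent or has prime index in $G$. Then ${\bf O}_{2',2,2',2}(G)=G$.
   Context: All groups are finite. A group is $2$-nilpotent if it has a normal Hall $2'$-subgroup. A maximal subgroup means a maximal proper subgroup. For a prime $p$, ${\bf O}_{p'}(G)$ is the largest normal $p'$-subgroup and ${\bf O}_p(G)$ the largest normal $p$-subgroup of $G$; the upper $p'p$-series is defined recursively: ${\bf O}_{p',p}(G)$ is the full preimage in $G$ of ${\bf O}_p(G/{\bf O}_{p'}(G))$, ${\bf O}_{p',p,p'}(G)$ is the full preimage of ${\bf O}_{p'}(G/{\bf O}_{p',p}(G))$, ${\bf O}_{p',p,p',p}(G)$ the full preimage of ${\bf O}_p(G/{\bf O}_{p',p,p'}(G))$, and so on. Here $p=2$. *)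

theory Defs
  imports "HOL-Algebra.Algebra"
begin

definition is_p_set :: "nat \<Rightarrow> 'a set \<Rightarrow> bool" where
  "is_p_set p H \<longleftrightarrow> (\<exists>n. card H = p ^ n)"

definition is_p'_set :: "nat \<Rightarrow> 'a set \<Rightarrow> bool" where
  "is_p'_set p H \<longleftrightarrow> \<not> p dvd card H"

definition O_p :: "nat \<Rightarrow> ('a, 'b) monoid_scheme \<Rightarrow> 'a set" where
  "O_p p G = (THE H. H \<lhd> G \<and> is_p_set p H \<and>
                (\<forall>K. K \<lhd> G \<and> is_p_set p K \<longrightarrow> K \<subseteq> H))"

definition O_p' :: "nat \<Rightarrow> ('a, 'b) monoid_scheme \<Rightarrow> 'a set" where
  "O_p' p G = (THE H. H \<lhd> G \<and> is_p'_set p H \<and>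
                (\<forall>K. K \<lhd> G \<and> is_p'_set p K \<longrightarrow> K \<subseteq> H))"

text \<open>Upper p'p-series: full preimages (unions of cosets) of O_p / O_{p'} of quotients.\<close>
definition O_p'p :: "nat \<Rightarrow> ('a, 'b) monoid_scheme \<Rightarrow> 'a set" where
  "O_p'p p G = \<Union> (O_p p (G Mod (O_p' p G)))"

definition O_p'pp' :: "nat \<Rightarrow> ('a, 'b) monoid_scheme \<Rightarrow> 'a set" where
  "O_p'pp' p G = \<Union> (O_p' p (G Mod (O_p'p p G)))"

definition O_p'pp'p :: "nat \<Rightarrow> ('a, 'b) monoid_scheme \<Rightarrow> 'a set" where
  "O_p'pp'p p G = \<Union> (O_p p (G Mod (O_p'pp' p G)))"

definition maximal_subgroup :: "'a set \<Rightarrow> ('a, 'b) monoid_scheme \<Rightarrow> bool" where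
  "maximal_subgroup H G \<longleftrightarrow> subgroup H G \<and> H \<noteq> carrier G \<and>
     (\<forall>K. subgroup K G \<and> H \<subseteq> K \<longrightarrow> K = H \<or> K = carrier G)"

text \<open>A finite group is 2-nilpotent if it has a normal Hall 2'-subgroup
  (odd order, index a power of 2).\<close>
definition two_nilpotent :: "('a, 'b) monoid_scheme \<Rightarrow> bool" where
  "two_nilpotent G \<longleftrightarrow> (\<exists>N. N \<lhd> G \<and> odd (card N) \<and>
       (\<exists>k. card (carrier G) = card N * 2 ^ k))"

end

(*
  Call a normal subgroup K good if there is a normal series K <= A <= B <= C <= G with
  |A : K| odd, |B : A| a power of 2, |C : B| odd and |G : C| a power of 2.  If {1} is good,
  then A <= O_2'(G), B <= O_2',2(G), C <= O_2',2,2'(G) and G = O_2',2,2',2(G).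

  Goodness is proved by downward induction on K.  If K has a proper normal overgroup of odd
  index over K, it inherits a series from it.  Otherwise a minimal normal subgroup N/K of G/K
  has prime-power order since G is solvable, so |N : K| = 2^k, and N has a series
  N <= A <= B <= C.  If A = N we are done.  If some maximal subgroup M >= K misses N and is
  2-nilpotent with normal Hall 2'-subgroup H, then K <= N <= NH <= G is already a series.
  In all remaining cases we produce a proper normal overgroup of K of odd index, a
  contradiction: if such an M has prime index, the index is 2, N/K is central of order 2 and
  A /\ M works; if every maximal subgroup above K contains N, a Frattini argument with a
  Sylow subgroup S of a minimal normal W/N inside A/N shows that KS is normal.
*)

theory Submission
  imports Defs
begin

lemma card_eq_card_image_mult_fibre:
  assumes "finite A" and "\<And>a. a \<in> A \<Longrightarrow> card {x\<in>A. f x = f a} = c"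
  shows "card A = card (f ` A) * c"
proof -
  have "A = (\<Union>y\<in>f ` A. {x\<in>A. f x = y})" by auto
  also have "card \<dots> = (\<Sum>y\<in>f ` A. card {x\<in>A. f x = y})"
    by (rule card_UN_disjoint) (use assms(1) in auto)
  also have "\<dots> = (\<Sum>y\<in>f ` A. c)"
    by (rule sum.cong) (auto simp: assms(2))
  finally show ?thesis by simp
qed

context group
begin

lemma inv_mult_cancel_left [simp]: "x \<in> carrier G \<Longrightarrow> y \<in> carrier G \<Longrightarrow> inv x \<otimes> (x \<otimes> y) = y"
  by (simp add: m_assoc[symmetric])

lemma mult_inv_cancel_left [simp]: "x \<in> carrier G \<Longrightarrow> y \<in> carrier G \<Longrightarrow> x \<otimes> (inv x \<otimes> y) = y"
  by (simp add: m_assoc[symmetric])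

lemma conj_pow:
  assumes "g \<in> carrier G" "v \<in> carrier G"
  shows "(g \<otimes> v \<otimes> inv g) [^] (n::nat) = g \<otimes> v [^] n \<otimes> inv g"
proof (induct n)
  case (Suc n)
  have "(g \<otimes> v \<otimes> inv g) [^] Suc n = (g \<otimes> v [^] n \<otimes> inv g) \<otimes> (g \<otimes> v \<otimes> inv g)"
    using Suc by simp
  also have "\<dots> = g \<otimes> (v [^] n \<otimes> v) \<otimes> inv g" using assms by (simp add: m_assoc)
  finally show ?case by simp
qed (use assms in simp)

lemma subset_set_mult_subgroup_right:
  assumes "subgroup S G" "N \<subseteq> carrier G"
  shows "N \<subseteq> N <#> S"
  using subgroup.one_closed[OF assms(1)] assms(2) unfolding set_mult_def by force

lemma subset_set_mult_subgroup_left: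
  assumes "subgroup N G" "S \<subseteq> carrier G"
  shows "S \<subseteq> N <#> S"
  using subgroup.one_closed[OF assms(1)] assms(2) unfolding set_mult_def by force

lemma set_mult_subset_subgroup:
  assumes "subgroup L G" "N \<subseteq> L" "S \<subseteq> L"
  shows "N <#> S \<subseteq> L"
  using assms unfolding set_mult_def by (auto intro: subgroup.m_closed)

definition conjugate :: "'a \<Rightarrow> 'a set \<Rightarrow> 'a set" where
  "conjugate g H = (\<lambda>x. g \<otimes> x \<otimes> inv g) ` H"

lemma conjugate_in_conjugate:
  "g \<in> carrier G \<Longrightarrow> x \<in> H \<Longrightarrow> g \<otimes> x \<otimes> inv g \<in> conjugate g H"
  unfolding conjugate_def by blast

lemma subgroup_conjugate:
  assumes H: "subgroup H G" and g: "g \<in> carrier G"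
  shows "subgroup (conjugate g H) G"
proof (rule subgroupI)
  have HG: "H \<subseteq> carrier G" using H subgroup.subset by blast
  show "conjugate g H \<subseteq> carrier G" using HG g unfolding conjugate_def by auto
  show "conjugate g H \<noteq> {}" using subgroup.one_closed[OF H] unfolding conjugate_def by auto
next
  fix a assume "a \<in> conjugate g H"
  then obtain x where x: "x \<in> H" "a = g \<otimes> x \<otimes> inv g" unfolding conjugate_def by auto
  have "x \<in> carrier G" using x H subgroup.mem_carrier by metis
  hence "inv a = g \<otimes> inv x \<otimes> inv g" using x g by (simp add: inv_mult_group m_assoc)
  moreover have "inv x \<in> H" using x(1) H subgroup.m_inv_closed by metis
  ultimately show "inv a \<in> conjugate g H" using conjugate_in_conjugate[OF g] by simp
next
  fix a b assume "a \<in> conjugate g H" "b \<in> conjugate g H"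
  then obtain x y where x: "x \<in> H" "a = g \<otimes> x \<otimes> inv g" and y: "y \<in> H" "b = g \<otimes> y \<otimes> inv g"
    unfolding conjugate_def by auto
  have "x \<in> carrier G" "y \<in> carrier G" using x y H subgroup.mem_carrier by metis+
  hence "a \<otimes> b = g \<otimes> (x \<otimes> y) \<otimes> inv g" using x y g by (simp add: m_assoc)
  moreover have "x \<otimes> y \<in> H" using x(1) y(1) H subgroup.m_closed by metis
  ultimately show "a \<otimes> b \<in> conjugate g H" using conjugate_in_conjugate[OF g] by simp
qed

lemma card_conjugate:
  assumes "H \<subseteq> carrier G" "g \<in> carrier G"
  shows "card (conjugate g H) = card H"
  unfolding conjugate_def
  by (rule card_image, rule inj_onI) (use conjugation_is_inj assms in blast)

lemma conjugate_mult:
  assumes "H \<subseteq> carrier G" "g \<in> carrier G" "h \<in> carrier G"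
  shows "conjugate g (conjugate h H) = conjugate (g \<otimes> h) H"
proof -
  have "g \<otimes> (h \<otimes> x \<otimes> inv h) \<otimes> inv g = g \<otimes> h \<otimes> x \<otimes> inv (g \<otimes> h)" if "x \<in> H" for x
    using that assms by (auto simp: m_assoc inv_mult_group)
  thus ?thesis unfolding conjugate_def image_image by (auto simp: image_def)
qed

lemma conjugate_one:
  assumes "H \<subseteq> carrier G"
  shows "conjugate \<one> H = H"
proof -
  have "(\<lambda>x. \<one> \<otimes> x \<otimes> inv \<one>) ` H = (\<lambda>x. x) ` H" by (rule image_cong) (use assms in auto)
  thus ?thesis unfolding conjugate_def by simp
qed

lemma conjugate_inv_conjugate:
  assumes "H \<subseteq> carrier G" "g \<in> carrier G"
  shows "conjugate (inv g) (conjugate g H) = H"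
  using conjugate_mult[OF assms(1) inv_closed[OF assms(2)] assms(2)] conjugate_one assms by simp

lemma normalizer_iff_conjugate_eq:
  assumes "H \<subseteq> carrier G"
  shows "g \<in> normalizer G H \<longleftrightarrow> g \<in> carrier G \<and> conjugate g H = H"
proof -
  have "(g <# H) #> inv g = conjugate g H" if "g \<in> carrier G"
    unfolding l_coset_def r_coset_def conjugate_def by auto
  thus ?thesis using assms unfolding normalizer_def stabilizer_def by auto
qed

definition double_coset :: "'a set \<Rightarrow> 'a \<Rightarrow> 'a set \<Rightarrow> 'a set" where
  "double_coset S w T = {s \<otimes> w \<otimes> t |s t. s \<in> S \<and> t \<in> T}"

lemma double_coset_subset:
  "subgroup W G \<Longrightarrow> S \<subseteq> W \<Longrightarrow> T \<subseteq> W \<Longrightarrow> w \<in> W \<Longrightarrow> double_coset S w T \<subseteq> W"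
  unfolding double_coset_def by (auto intro!: subgroup.m_closed)

lemma self_in_double_coset:
  assumes "subgroup S G" "subgroup T G" "w \<in> carrier G"
  shows "w \<in> double_coset S w T"
proof -
  have "\<one> \<otimes> w \<otimes> \<one> \<in> double_coset S w T"
    unfolding double_coset_def using assms subgroup.one_closed by blast
  thus ?thesis using assms(3) by simp
qed

lemma double_coset_subset_double_coset:
  assumes S: "subgroup S G" and T: "subgroup T G" and w: "w \<in> carrier G"
    and v: "v \<in> double_coset S w T"
  shows "double_coset S v T \<subseteq> double_coset S w T"
proof
  fix y assume "y \<in> double_coset S v T"
  then obtain s t where st: "s \<in> S" "t \<in> T" "y = s \<otimes> v \<otimes> t" unfolding double_coset_def by auto
  obtain s' t' where st': "s' \<in> S" "t' \<in> T" "v = s' \<otimes> w \<otimes> t'"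
    using v unfolding double_coset_def by auto
  have "s \<in> carrier G" "s' \<in> carrier G" "t \<in> carrier G" "t' \<in> carrier G"
    using st st' S T subgroup.mem_carrier by metis+
  hence "y = (s \<otimes> s') \<otimes> w \<otimes> (t' \<otimes> t)" using st st' w by (simp add: m_assoc)
  moreover have "s \<otimes> s' \<in> S" "t' \<otimes> t \<in> T" using st st' S T subgroup.m_closed by metis+
  ultimately show "y \<in> double_coset S w T" unfolding double_coset_def by blast
qed

lemma double_coset_eq:
  assumes S: "subgroup S G" and T: "subgroup T G" and w: "w \<in> carrier G"
    and v: "v \<in> double_coset S w T"
  shows "double_coset S v T = double_coset S w T"
proof -
  obtain s t where st: "s \<in> S" "t \<in> T" "v = s \<otimes> w \<otimes> t"
    using v unfolding double_coset_def by auto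
  have sG: "s \<in> carrier G" and tG: "t \<in> carrier G" using st S T subgroup.mem_carrier by metis+
  have "w = inv s \<otimes> v \<otimes> inv t" using st sG tG w by (simp add: m_assoc)
  moreover have "inv s \<in> S" "inv t \<in> T" using st S T subgroup.m_inv_closed by metis+
  ultimately have "w \<in> double_coset S v T" unfolding double_coset_def by blast
  moreover have "v \<in> carrier G" using st sG tG w by simp
  ultimately show ?thesis
    using double_coset_subset_double_coset S T w v by blast
qed

lemma double_coset_disjoint:
  assumes S: "subgroup S G" and T: "subgroup T G" and "v \<in> carrier G" "w \<in> carrier G"
    and "double_coset S v T \<noteq> double_coset S w T"
  shows "double_coset S v T \<inter> double_coset S w T = {}"
proof (rule ccontr)
  assume "double_coset S v T \<inter> double_coset S w T \<noteq> {}"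
  then obtain y where y: "y \<in> double_coset S v T" "y \<in> double_coset S w T" by blast
  have "y \<in> carrier G"
    using y(1) double_coset_subset[OF subgroup_self] S T \<open>v \<in> carrier G\<close> subgroup.subset by blast
  hence "double_coset S y T = double_coset S v T" "double_coset S y T = double_coset S w T"
    using double_coset_eq[OF S T] y assms(3,4) by blast+
  thus False using assms(5) by simp
qed

end

locale finite_group = group +
  assumes finite_carrier: "finite (carrier G)"
begin

lemma finite_subgroup: "subgroup H G \<Longrightarrow> finite H"
  using finite_carrier subgroup.subset finite_subset by metis

lemma card_subgroup_pos: "subgroup H G \<Longrightarrow> card H > 0"
  using finite_subgroup subgroup.one_closed card_gt_0_iff by fastforce

lemma card_subgroup_dvd:
  assumes "subgroup H G" "subgroup K G" "H \<subseteq> K"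
  shows "card H dvd card K"
proof -
  interpret K: group "G\<lparr>carrier := K\<rparr>" using assms(2) subgroup_imp_group by blast
  have "subgroup H (G\<lparr>carrier := K\<rparr>)" using subgroup_incl assms by blast
  hence "card (rcosets\<^bsub>G\<lparr>carrier := K\<rparr>\<^esub> H) * card H = card K"
    using K.lagrange by (simp add: order_def)
  thus ?thesis by (metis dvd_triv_right)
qed

lemma card_subgroup_dvd_order: "subgroup H G \<Longrightarrow> card H dvd card (carrier G)"
  using card_subgroup_dvd[OF _ subgroup_self] subgroup.subset by blast

lemma card_subgroup_le: "subgroup H G \<Longrightarrow> card H \<le> card (carrier G)"
  using card_mono[OF finite_carrier] subgroup.subset by blast

lemma subgroup_eq_if_card_le:
  assumes "subgroup K G" "H \<subseteq> K" "card K \<le> card H"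
  shows "H = K"
  using finite_subgroup[OF assms(1)] assms card_seteq by blast

text \<open>Each fibre of \<open>(h, k) \<mapsto> h k\<close> on \<open>H \<times> K\<close> is a translate of \<open>H \<inter> K\<close>.\<close>
lemma card_set_mult_mult_card_Int:
  assumes H: "subgroup H G" and K: "subgroup K G"
  shows "card (H <#> K) * card (H \<inter> K) = card H * card K"
proof -
  let ?f = "\<lambda>(h,k). h \<otimes> k"
  have fibre: "card {x\<in>H \<times> K. ?f x = ?f a} = card (H \<inter> K)" if a: "a \<in> H \<times> K" for a
  proof -
    obtain h k where hk: "a = (h,k)" "h \<in> H" "k \<in> K" using a by auto
    have hG: "h \<in> carrier G" and kG: "k \<in> carrier G"
      using hk H K subgroup.mem_carrier by metis+
    let ?g = "\<lambda>d. (h \<otimes> d, inv d \<otimes> k)"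
    have "{x\<in>H \<times> K. ?f x = ?f a} \<subseteq> ?g ` (H \<inter> K)"
    proof
      fix x assume "x \<in> {x\<in>H \<times> K. ?f x = ?f a}"
      then obtain h' k' where x: "x = (h',k')" "h' \<in> H" "k' \<in> K" "h' \<otimes> k' = h \<otimes> k"
        using hk by auto
      have h'G: "h' \<in> carrier G" and k'G: "k' \<in> carrier G"
        using x H K subgroup.mem_carrier by metis+
      let ?d = "inv h \<otimes> h'"
      have "?d = k \<otimes> inv k'"
      proof -
        have "inv h \<otimes> (h' \<otimes> k') \<otimes> inv k' = inv h \<otimes> (h \<otimes> k) \<otimes> inv k'" using x(4) by simp
        thus ?thesis using hG kG h'G k'G by (simp add: m_assoc)
      qed
      moreover have "?d \<in> H" using x hk H by (simp add: subgroup.m_closed subgroup.m_inv_closed)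
      ultimately have "?d \<in> H \<inter> K" using x hk K by (simp add: subgroup.m_closed subgroup.m_inv_closed)
      moreover have "h \<otimes> ?d = h'" using hG h'G by simp
      moreover have "inv ?d \<otimes> k = k'"
        using \<open>?d = k \<otimes> inv k'\<close> kG k'G by (simp add: inv_mult_group m_assoc)
      ultimately show "x \<in> ?g ` (H \<inter> K)" using x by force
    qed
    moreover have "?g ` (H \<inter> K) \<subseteq> {x\<in>H \<times> K. ?f x = ?f a}"
    proof
      fix x assume "x \<in> ?g ` (H \<inter> K)"
      then obtain d where d: "d \<in> H" "d \<in> K" "x = ?g d" by auto
      have dG: "d \<in> carrier G" using d H subgroup.mem_carrier by metis
      have "h \<otimes> d \<otimes> (inv d \<otimes> k) = h \<otimes> k" using dG hG kG by (simp add: m_assoc)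
      thus "x \<in> {x\<in>H \<times> K. ?f x = ?f a}" using d hk H K
        by (auto simp: subgroup.m_closed subgroup.m_inv_closed)
    qed
    ultimately have "{x\<in>H \<times> K. ?f x = ?f a} = ?g ` (H \<inter> K)" by (rule subset_antisym)
    moreover have "inj_on ?g (H \<inter> K)"
      by (rule inj_onI) (use hG H subgroup.mem_carrier in \<open>metis IntD1 Pair_inject l_cancel\<close>)
    ultimately show ?thesis by (simp add: card_image)
  qed
  have "?f ` (H \<times> K) = H <#> K" unfolding set_mult_def by auto
  moreover have "card (H \<times> K) = card (?f ` (H \<times> K)) * card (H \<inter> K)"
    by (rule card_eq_card_image_mult_fibre)
      (use finite_subgroup[OF H] finite_subgroup[OF K] fibre in auto)
  ultimately show ?thesis by (simp add: card_cartesian_product)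
qed

lemma card_set_mult_prime_power:
  assumes K: "subgroup K G" and S: "subgroup S G" and r: "Factorial_Ring.prime r"
    and card_S: "card S = r ^ a"
  obtains c where "card (K <#> S) = card K * r ^ c"
proof -
  have "card (K \<inter> S) dvd r ^ a"
    using card_subgroup_dvd[OF subgroups_Inter_pair[OF K S] S] card_S by simp
  then obtain c where c: "c \<le> a" "card (K \<inter> S) = r ^ c" using divides_primepow_nat[OF r] by blast
  have "card (K <#> S) * r ^ c = card K * r ^ (a - c) * r ^ c"
    using card_set_mult_mult_card_Int[OF K S] c card_S by (simp add: mult.assoc power_add[symmetric])
  hence "card (K <#> S) = card K * r ^ (a - c)" using prime_gt_0_nat[OF r] by simp
  thus thesis by (rule that)
qed

lemma finite_group_FactGroup: "N \<lhd> G \<Longrightarrow> finite_group (G Mod N)"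
  unfolding finite_group_def finite_group_axioms_def
  using normal.factorgroup_is_group finite_carrier by (auto simp: carrier_FactGroup)

lemma rcos_image_normal:
  assumes N: "N \<lhd> G" and Y: "Y \<lhd> G"
  shows "(\<lambda>x. N #> x) ` Y \<lhd> G Mod N"
proof -
  have "group_hom G (G Mod N) (\<lambda>x. N #> x)"
    using N normal.r_coset_hom_Mod normal.factorgroup_is_group
    unfolding group_hom_def group_hom_axioms_def by (metis is_group)
  moreover have "(\<lambda>x. N #> x) ` carrier G = carrier (G Mod N)" by (simp add: carrier_FactGroup)
  ultimately show ?thesis using Y normal.surj_hom_normal_subgroup by blast
qed

lemma card_rcos_image_mult_card_Int:
  assumes N: "N \<lhd> G" and Y: "subgroup Y G"
  shows "card ((\<lambda>x. N #> x) ` Y) * card (Y \<inter> N) = card Y"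
proof -
  have NS: "subgroup N G" using N normal_imp_subgroup by blast
  have fibre: "card {x\<in>Y. N #> x = N #> y} = card (Y \<inter> N)" if y: "y \<in> Y" for y
  proof -
    have yG: "y \<in> carrier G" using y Y subgroup.mem_carrier by metis
    have "{x\<in>Y. N #> x = N #> y} = (\<lambda>d. d \<otimes> y) ` (Y \<inter> N)"
    proof (intro subset_antisym subsetI)
      fix x assume x: "x \<in> {x\<in>Y. N #> x = N #> y}"
      hence xG: "x \<in> carrier G" using Y subgroup.mem_carrier by force
      have "x \<in> N #> y" using x rcos_self[OF xG NS] by auto
      then obtain n where n: "n \<in> N" "x = n \<otimes> y" unfolding r_coset_def by auto
      have "n = x \<otimes> inv y" using n NS yG by (simp add: m_assoc subgroup.mem_carrier)
      hence "n \<in> Y" using x y Y by (auto intro: subgroup.m_closed subgroup.m_inv_closed)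
      thus "x \<in> (\<lambda>d. d \<otimes> y) ` (Y \<inter> N)" using n by auto
    next
      fix x assume "x \<in> (\<lambda>d. d \<otimes> y) ` (Y \<inter> N)"
      then obtain d where d: "d \<in> Y" "d \<in> N" "x = d \<otimes> y" by auto
      have "x \<in> N #> y" using d yG NS rcosI subgroup.subset by metis
      hence "N #> y = N #> x" using repr_independence yG NS by blast
      thus "x \<in> {x\<in>Y. N #> x = N #> y}" using d y Y subgroup.m_closed by fastforce
    qed
    moreover have "inj_on (\<lambda>d. d \<otimes> y) (Y \<inter> N)"
      by (rule inj_onI) (use yG Y subgroup.mem_carrier in \<open>metis IntD1 r_cancel\<close>)
    ultimately show ?thesis by (simp add: card_image)
  qed
  show ?thesis
    using card_eq_card_image_mult_fibre[OF finite_subgroup[OF Y] fibre] by simp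
qed

lemma card_rcos_image_dvd:
  assumes N: "N \<lhd> G" and Y: "subgroup Y G" and D: "subgroup D G" "D \<subseteq> Y \<inter> N"
    and card_Y: "card Y = card D * f"
  shows "card ((\<lambda>x. N #> x) ` Y) dvd f"
proof -
  have "subgroup (Y \<inter> N) G" using Y N normal_imp_subgroup subgroups_Inter_pair by blast
  then obtain t where t: "card (Y \<inter> N) = card D * t" using card_subgroup_dvd D by blast
  have "card D * (card ((\<lambda>x. N #> x) ` Y) * t) = card D * f"
    using card_rcos_image_mult_card_Int[OF N Y] t card_Y by (simp add: ac_simps)
  hence "card ((\<lambda>x. N #> x) ` Y) * t = f" using card_subgroup_pos[OF D(1)] by simp
  thus ?thesis by (metis dvd_triv_left)
qed

lemma subset_Union_rcos_image:
  assumes "N \<lhd> G" and "subgroup Y G" and "(\<lambda>x. N #> x) ` Y \<subseteq> U"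
  shows "Y \<subseteq> \<Union>U"
proof
  fix y assume y: "y \<in> Y"
  hence "y \<in> N #> y"
    using rcos_self assms(1,2) normal_imp_subgroup subgroup.mem_carrier by metis
  thus "y \<in> \<Union>U" using y assms(3) by blast
qed

lemma ex_sylow_subgroup_of_subgroup:
  assumes W: "subgroup W G" and r: "Factorial_Ring.prime r" and card_W: "card W = r ^ a * m"
  obtains P where "subgroup P G" "P \<subseteq> W" "card P = r ^ a"
proof -
  interpret W: group "G\<lparr>carrier := W\<rparr>" using W subgroup_imp_group by blast
  have "\<exists>P. subgroup P (G\<lparr>carrier := W\<rparr>) \<and> card P = r ^ a"
    by (rule sylow_thm[OF r W.is_group])
      (use card_W finite_subgroup[OF W] in \<open>auto simp: order_def\<close>)
  then obtain P where P: "subgroup P (G\<lparr>carrier := W\<rparr>)" "card P = r ^ a" by blast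
  show thesis using that incl_subgroup[OF W P(1)] subgroup.subset[OF P(1)] P(2) by simp
qed

lemma pow_card_subgroup_eq_one:
  assumes P: "subgroup P G" and x: "x \<in> P"
  shows "x [^] card P = \<one>"
proof -
  interpret P: group "G\<lparr>carrier := P\<rparr>" using P subgroup_imp_group by blast
  have "x [^]\<^bsub>G\<lparr>carrier := P\<rparr>\<^esub> order (G\<lparr>carrier := P\<rparr>) = \<one>"
    using P.pow_order_eq_1 x by simp
  thus ?thesis using nat_pow_consistent by (simp add: order_def)
qed

lemma card_double_coset:
  assumes S: "subgroup S G" and T: "subgroup T G" and w: "w \<in> carrier G"
  shows "card (double_coset S w T) = card (S <#> conjugate w T)"
proof -
  have "double_coset S w T = (\<lambda>x. x \<otimes> w) ` (S <#> conjugate w T)"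
  proof (intro subset_antisym subsetI)
    fix y assume "y \<in> double_coset S w T"
    then obtain s t where st: "s \<in> S" "t \<in> T" "y = s \<otimes> w \<otimes> t" unfolding double_coset_def by auto
    have "s \<in> carrier G" "t \<in> carrier G" using st S T subgroup.mem_carrier by metis+
    hence "y = (s \<otimes> (w \<otimes> t \<otimes> inv w)) \<otimes> w" using st w by (simp add: m_assoc)
    moreover have "s \<otimes> (w \<otimes> t \<otimes> inv w) \<in> S <#> conjugate w T"
      using st unfolding set_mult_def conjugate_def by auto
    ultimately show "y \<in> (\<lambda>x. x \<otimes> w) ` (S <#> conjugate w T)" by blast
  next
    fix y assume "y \<in> (\<lambda>x. x \<otimes> w) ` (S <#> conjugate w T)"
    then obtain s t where st: "s \<in> S" "t \<in> T" "y = s \<otimes> (w \<otimes> t \<otimes> inv w) \<otimes> w"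
      unfolding set_mult_def conjugate_def by auto
    have "s \<in> carrier G" "t \<in> carrier G" using st S T subgroup.mem_carrier by metis+
    hence "y = s \<otimes> w \<otimes> t" using st w by (simp add: m_assoc)
    thus "y \<in> double_coset S w T" unfolding double_coset_def using st by blast
  qed
  moreover have "S <#> conjugate w T \<subseteq> carrier G"
    using S T w subgroup_conjugate subgroup.subset setmult_subset_G by metis
  moreover have "inj_on (\<lambda>x. x \<otimes> w) (S <#> conjugate w T)"
    by (rule inj_onI) (use calculation(2) w r_cancel in blast)
  ultimately show ?thesis by (simp add: card_image)
qed

lemma prime_power_dvd_card_double_coset:
  assumes S: "subgroup S G" and T: "subgroup T G" and w: "w \<in> carrier G"
    and r: "Factorial_Ring.prime r" and card_S: "card S = r ^ a" and card_T: "card T = r ^ a"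
    and "conjugate w T \<noteq> S"
  shows "r ^ Suc a dvd card (double_coset S w T)"
proof -
  let ?C = "conjugate w T"
  have CS: "subgroup ?C G" using subgroup_conjugate[OF T w] .
  have card_C: "card ?C = r ^ a" using card_conjugate[OF subgroup.subset[OF T] w] card_T by simp
  have "card (S \<inter> ?C) dvd r ^ a"
    using card_subgroup_dvd[OF subgroups_Inter_pair[OF S CS] S] card_S by simp
  then obtain c where c: "c \<le> a" "card (S \<inter> ?C) = r ^ c" using divides_primepow_nat[OF r] by blast
  have "c \<noteq> a"
  proof
    assume "c = a"
    hence "S \<inter> ?C = ?C" using subgroup_eq_if_card_le[OF CS Int_lower2] c card_C by simp
    hence "?C = S" using subgroup_eq_if_card_le[OF S, of ?C] card_C card_S by auto
    thus False using \<open>?C \<noteq> S\<close> by blast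
  qed
  have "card (S <#> ?C) * r ^ c = r ^ (a + a - c) * r ^ c"
    using card_set_mult_mult_card_Int[OF S CS] card_S card_C c by (simp add: power_add[symmetric])
  hence "card (S <#> ?C) = r ^ (a + a - c)" using prime_gt_0_nat[OF r] by simp
  moreover have "r ^ Suc a dvd r ^ (a + a - c)" using c \<open>c \<noteq> a\<close> by (intro le_imp_power_dvd) simp
  ultimately show ?thesis using card_double_coset[OF S T w] by simp
qed

text \<open>Sylow's conjugacy theorem inside a subgroup \<open>W\<close>, by counting double cosets \<open>S w T\<close>: if
  \<open>T\<close> were not conjugate to \<open>S\<close>, each of them would have order divisible by \<open>r\<^sup>a\<^sup>+\<^sup>1\<close>.\<close>
lemma sylow_conjugate:
  assumes W: "subgroup W G" and S: "subgroup S G" "S \<subseteq> W" and T: "subgroup T G" "T \<subseteq> W"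
    and r: "Factorial_Ring.prime r" and card_S: "card S = r ^ a" and card_T: "card T = r ^ a"
    and card_W: "card W = r ^ a * m" and "\<not> r dvd m"
  shows "\<exists>w\<in>W. T = conjugate w S"
proof (rule ccontr)
  assume not_conj: "\<not> (\<exists>w\<in>W. T = conjugate w S)"
  have WG: "W \<subseteq> carrier G" using W subgroup.subset by blast
  have card_double_coset_dvd: "r ^ Suc a dvd card (double_coset S w T)" if w: "w \<in> W" for w
  proof (rule prime_power_dvd_card_double_coset[OF S(1) T(1) _ r card_S card_T])
    show wG: "w \<in> carrier G" using w WG by blast
    show "conjugate w T \<noteq> S"
    proof
      assume "conjugate w T = S"
      hence "T = conjugate (inv w) S" using conjugate_inv_conjugate[OF subgroup.subset[OF T(1)] wG] by simp
      moreover have "inv w \<in> W" using w W subgroup.m_inv_closed by metis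
      ultimately show False using not_conj by blast
    qed
  qed
  have "r ^ Suc a dvd card (\<Union>w\<in>W. double_coset S w T)"
  proof (rule dvd_partition)
    show "finite (\<Union>w\<in>W. double_coset S w T)"
      using double_coset_subset[OF W S(2) T(2)] finite_subgroup[OF W]
      by (meson UN_least finite_subset)
    show "\<forall>c\<in>(\<lambda>w. double_coset S w T) ` W. r ^ Suc a dvd card c"
      using card_double_coset_dvd by blast
    show "\<forall>c1\<in>(\<lambda>w. double_coset S w T) ` W. \<forall>c2\<in>(\<lambda>w. double_coset S w T) ` W.
        c1 \<noteq> c2 \<longrightarrow> c1 \<inter> c2 = {}"
      using double_coset_disjoint[OF S(1) T(1)] WG by blast
  qed
  moreover have "(\<Union>w\<in>W. double_coset S w T) = W"
    using double_coset_subset[OF W S(2) T(2)] self_in_double_coset[OF S(1) T(1)] WG by blast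
  ultimately have "r * r ^ a dvd r ^ a * m" using card_W by simp
  hence "r dvd m" using prime_gt_0_nat[OF r] by (simp add: mult.commute)
  thus False using \<open>\<not> r dvd m\<close> by blast
qed

lemma mem_normalizer_if_conjugate_subset:
  assumes H: "subgroup H G" and x: "x \<in> carrier G" and "conjugate x H \<subseteq> H"
  shows "x \<in> normalizer G H"
proof -
  have "conjugate x H = H"
    using card_subset_eq[OF finite_subgroup[OF H] assms(3)] card_conjugate[OF subgroup.subset[OF H] x] by simp
  thus ?thesis using normalizer_iff_conjugate_eq[OF subgroup.subset[OF H]] x by simp
qed

lemma subgroup_subset_normalizer:
  assumes H: "subgroup H G"
  shows "H \<subseteq> normalizer G H"
proof
  fix s assume s: "s \<in> H"
  have "conjugate s H \<subseteq> H"
    unfolding conjugate_def using s H by (auto intro: subgroup.m_closed subgroup.m_inv_closed)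
  thus "s \<in> normalizer G H" using mem_normalizer_if_conjugate_subset[OF H] s H subgroup.mem_carrier by metis
qed

lemma Frattini_argument:
  assumes W: "W \<lhd> G" and S: "subgroup S G" "S \<subseteq> W" and r: "Factorial_Ring.prime r"
    and card_S: "card S = r ^ a" and card_W: "card W = r ^ a * m" and "\<not> r dvd m"
    and g: "g \<in> carrier G"
  obtains w where "w \<in> W" "inv w \<otimes> g \<in> normalizer G S"
proof -
  have WS: "subgroup W G" using W normal_imp_subgroup by blast
  have SG: "S \<subseteq> carrier G" using S subgroup.subset by blast
  have "conjugate g S \<subseteq> W"
    unfolding conjugate_def using W g S(2) normal_inv_iff by blast
  then obtain w where w: "w \<in> W" "conjugate g S = conjugate w S"
    using sylow_conjugate[OF WS S subgroup_conjugate[OF S(1) g] _ r card_S _ card_W \<open>\<not> r dvd m\<close>]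
      card_conjugate[OF SG g] card_S by metis
  have wG: "w \<in> carrier G" using w WS subgroup.mem_carrier by metis
  have "conjugate (inv w \<otimes> g) S = conjugate (inv w) (conjugate w S)"
    using conjugate_mult[OF SG inv_closed[OF wG] g] w(2) by simp
  also have "\<dots> = S" using conjugate_inv_conjugate[OF SG wG] .
  finally have "inv w \<otimes> g \<in> normalizer G S"
    using normalizer_iff_conjugate_eq[OF SG] wG g by simp
  thus thesis using that w(1) by blast
qed

lemma ex_maximal_subgroup_above:
  assumes "subgroup L G" "L \<noteq> carrier G"
  obtains M where "maximal_subgroup M G" "L \<subseteq> M"
proof -
  have "\<forall>H. subgroup H G \<and> L \<subseteq> H \<and> H \<noteq> carrier G \<longrightarrow> card H < Suc (card (carrier G))"
    using card_subgroup_le le_imp_less_Suc by blast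
  hence "\<exists>M. (subgroup M G \<and> L \<subseteq> M \<and> M \<noteq> carrier G) \<and>
      (\<forall>H. subgroup H G \<and> L \<subseteq> H \<and> H \<noteq> carrier G \<longrightarrow> card H \<le> card M)"
    by (intro Lattices_Big.ex_has_greatest_nat[where k=L]) (use assms in simp_all)
  then obtain M where M: "subgroup M G" "L \<subseteq> M" "M \<noteq> carrier G"
    and M_max: "\<And>H. subgroup H G \<Longrightarrow> L \<subseteq> H \<Longrightarrow> H \<noteq> carrier G \<Longrightarrow> card H \<le> card M"
    by blast
  have "K = M \<or> K = carrier G" if K: "subgroup K G" "M \<subseteq> K" for K
  proof (cases "K = carrier G")
    case False
    hence "card K \<le> card M" using M_max K M(2) by blast
    thus ?thesis using subgroup_eq_if_card_le[OF K] by simp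
  qed simp
  hence "maximal_subgroup M G" unfolding maximal_subgroup_def using M by blast
  thus thesis using that M(2) by blast
qed

lemma set_mult_eq_carrier_if_maximal:
  assumes N: "N \<lhd> G" and M: "maximal_subgroup M G" and "\<not> N \<subseteq> M"
  shows "N <#> M = carrier G"
proof -
  have MS: "subgroup M G" using M unfolding maximal_subgroup_def by blast
  have NS: "subgroup N G" using N normal_imp_subgroup by blast
  have "M \<subseteq> N <#> M" using subset_set_mult_subgroup_left[OF NS subgroup.subset[OF MS]] .
  moreover have "N \<subseteq> N <#> M" using subset_set_mult_subgroup_right[OF MS subgroup.subset[OF NS]] .
  hence "N <#> M \<noteq> M" using assms(3) by blast
  ultimately show ?thesis using M mult_norm_subgroup[OF N MS] unfolding maximal_subgroup_def by blast
qed

lemma index_two_coset: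
  assumes H: "subgroup H G" and N: "subgroup N G" and "H \<subseteq> N" and card_N: "card N = 2 * card H"
    and x: "x \<in> N" "x \<notin> H" and z: "z \<in> N" "z \<notin> H"
  shows "z \<otimes> inv x \<in> H"
proof -
  have xG: "x \<in> carrier G" using x N subgroup.mem_carrier by metis
  have HG: "H \<subseteq> carrier G" using H subgroup.subset by blast
  have "H #> x \<subseteq> N" using \<open>H \<subseteq> N\<close> x N unfolding r_coset_def by (auto intro: subgroup.m_closed)
  moreover have "H \<inter> (H #> x) = {}"
  proof (rule ccontr)
    assume "H \<inter> (H #> x) \<noteq> {}"
    then obtain h h' where "h \<in> H" "h' \<in> H" "h' = h \<otimes> x" unfolding r_coset_def by blast
    hence "x = inv h \<otimes> h'" using HG xG by auto
    thus False using \<open>h \<in> H\<close> \<open>h' \<in> H\<close> x(2) H subgroup.m_closed subgroup.m_inv_closed by metis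
  qed
  moreover have "card (H #> x) = card H"
    using card_rcosets_equal[OF rcosetsI[OF HG xG] HG] by simp
  ultimately have "card (H \<union> (H #> x)) = card N"
    using card_Un_disjoint finite_subgroup[OF H] finite_subgroup[OF N] finite_subset card_N
    by (metis mult_2)
  hence "H \<union> (H #> x) = N"
    using subgroup_eq_if_card_le[OF N] \<open>H \<subseteq> N\<close> \<open>H #> x \<subseteq> N\<close> by simp
  then obtain h where h: "h \<in> H" "z = h \<otimes> x" using z unfolding r_coset_def by auto
  have "z \<otimes> inv x = h" using h xG HG by (auto simp: m_assoc)
  thus ?thesis using h by simp
qed

lemma index_two_normal:
  assumes H: "subgroup H G" and N: "subgroup N G" and "H \<subseteq> N" and card_N: "card N = 2 * card H"
    and n: "n \<in> N" and h: "h \<in> H"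
  shows "n \<otimes> h \<otimes> inv n \<in> H"
proof (cases "n \<in> H")
  case True thus ?thesis using h H by (metis subgroup.m_closed subgroup.m_inv_closed)
next
  case False
  have nG: "n \<in> carrier G" and hG: "h \<in> carrier G" using n h N H subgroup.mem_carrier by metis+
  have "n \<otimes> h \<in> N" using n h \<open>H \<subseteq> N\<close> N subgroup.m_closed by (metis subsetD)
  moreover have "n \<otimes> h \<notin> H"
  proof
    assume "n \<otimes> h \<in> H"
    hence "n \<otimes> h \<otimes> inv h \<in> H" using h H by (metis subgroup.m_closed subgroup.m_inv_closed)
    thus False using False nG hG by (simp add: m_assoc)
  qed
  ultimately show ?thesis using index_two_coset[OF H N \<open>H \<subseteq> N\<close> card_N n False] by blast
qed

section \<open>The upper \<open>p'p\<close>-series\<close>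

lemma ex_greatest_normal_subgroup:
  assumes "P (1::nat)"
    and closed: "\<And>a b c d. P a \<Longrightarrow> P b \<Longrightarrow> c * d = a * b \<Longrightarrow> P c"
  shows "\<exists>H. H \<lhd> G \<and> P (card H) \<and> (\<forall>K. K \<lhd> G \<and> P (card K) \<longrightarrow> K \<subseteq> H)"
proof -
  have "\<forall>H. H \<lhd> G \<and> P (card H) \<longrightarrow> card H < Suc (card (carrier G))"
    using card_subgroup_le normal_imp_subgroup le_imp_less_Suc by blast
  hence "\<exists>H. (H \<lhd> G \<and> P (card H)) \<and> (\<forall>K. K \<lhd> G \<and> P (card K) \<longrightarrow> card K \<le> card H)"
    by (intro Lattices_Big.ex_has_greatest_nat[where k="{\<one>}"]) (use one_is_normal assms(1) in simp_all)
  then obtain H where H: "H \<lhd> G" "P (card H)"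
    and H_max: "\<And>K. K \<lhd> G \<Longrightarrow> P (card K) \<Longrightarrow> card K \<le> card H"
    by blast
  have "K \<subseteq> H" if K: "K \<lhd> G" "P (card K)" for K
  proof -
    have HS: "subgroup H G" and KS: "subgroup K G" using H K normal_imp_subgroup by auto
    have HK: "H <#> K \<lhd> G" using normal_subgroup_set_mult_closed H K by blast
    have "card (H <#> K) * card (H \<inter> K) = card H * card K"
      using card_set_mult_mult_card_Int HS KS by blast
    hence "card (H <#> K) \<le> card H" using closed H K H_max HK by blast
    hence "H = H <#> K"
      by (rule subgroup_eq_if_card_le[OF normal_imp_subgroup[OF HK]
            subset_set_mult_subgroup_right[OF KS subgroup.subset[OF HS]]])
    thus ?thesis using subset_set_mult_subgroup_left[OF HS subgroup.subset[OF KS]] by simp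
  qed
  thus ?thesis using H by blast
qed

lemma O_p:
  assumes "Factorial_Ring.prime p"
  shows O_p_normal: "O_p p G \<lhd> G"
    and normal_p_set_subset_O_p: "\<And>K. K \<lhd> G \<Longrightarrow> is_p_set p K \<Longrightarrow> K \<subseteq> O_p p G"
proof -
  have "\<exists>H. H \<lhd> G \<and> is_p_set p H \<and> (\<forall>K. K \<lhd> G \<and> is_p_set p K \<longrightarrow> K \<subseteq> H)"
    unfolding is_p_set_def
  proof (rule ex_greatest_normal_subgroup)
    fix a b c d :: nat assume "\<exists>n. a = p ^ n" "\<exists>n. b = p ^ n" "c * d = a * b"
    then obtain i j where "c * d = p ^ (i + j)" by (auto simp: power_add)
    hence "c dvd p ^ (i + j)" by (metis dvd_triv_left)
    thus "\<exists>n. c = p ^ n" using divides_primepow_nat[OF assms] by auto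
  qed (metis power_0)
  then obtain H where H: "H \<lhd> G \<and> is_p_set p H \<and> (\<forall>K. K \<lhd> G \<and> is_p_set p K \<longrightarrow> K \<subseteq> H)"
    by blast
  moreover have "O_p p G = H"
    unfolding O_p_def by (rule the_equality) (use H in blast)+
  ultimately have "O_p p G \<lhd> G \<and> is_p_set p (O_p p G) \<and> (\<forall>K. K \<lhd> G \<and> is_p_set p K \<longrightarrow> K \<subseteq> O_p p G)"
    by simp
  thus "O_p p G \<lhd> G" "\<And>K. K \<lhd> G \<Longrightarrow> is_p_set p K \<Longrightarrow> K \<subseteq> O_p p G"
    by blast+
qed

lemma O_p':
  assumes "Factorial_Ring.prime p"
  shows O_p'_normal: "O_p' p G \<lhd> G"
    and normal_p'_set_subset_O_p': "\<And>K. K \<lhd> G \<Longrightarrow> is_p'_set p K \<Longrightarrow> K \<subseteq> O_p' p G"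
proof -
  have "\<exists>H. H \<lhd> G \<and> is_p'_set p H \<and> (\<forall>K. K \<lhd> G \<and> is_p'_set p K \<longrightarrow> K \<subseteq> H)"
    unfolding is_p'_set_def
  proof (rule ex_greatest_normal_subgroup)
    show "\<not> p dvd 1" using assms by (simp add: prime_nat_iff)
  next
    fix a b c d :: nat assume "\<not> p dvd a" "\<not> p dvd b" "c * d = a * b"
    thus "\<not> p dvd c" using assms by (metis dvd_mult2 prime_dvd_mult_iff)
  qed
  then obtain H where H: "H \<lhd> G \<and> is_p'_set p H \<and> (\<forall>K. K \<lhd> G \<and> is_p'_set p K \<longrightarrow> K \<subseteq> H)"
    by blast
  moreover have "O_p' p G = H"
    unfolding O_p'_def by (rule the_equality) (use H in blast)+
  ultimately have "O_p' p G \<lhd> G \<and> is_p'_set p (O_p' p G) \<and> (\<forall>K. K \<lhd> G \<and> is_p'_set p K \<longrightarrow> K \<subseteq> O_p' p G)"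
    by simp
  thus "O_p' p G \<lhd> G" "\<And>K. K \<lhd> G \<Longrightarrow> is_p'_set p K \<Longrightarrow> K \<subseteq> O_p' p G"
    by blast+
qed

lemma subset_Union_O_p_FactGroup:
  assumes p: "Factorial_Ring.prime p" and N: "N \<lhd> G" and Y: "Y \<lhd> G"
    and D: "subgroup D G" "D \<subseteq> Y \<inter> N" and card_Y: "card Y = card D * p ^ k"
  shows "Y \<subseteq> \<Union> (O_p p (G Mod N))"
proof -
  interpret Q: finite_group "G Mod N" using finite_group_FactGroup N by blast
  have "card ((\<lambda>x. N #> x) ` Y) dvd p ^ k"
    using card_rcos_image_dvd[OF N normal_imp_subgroup[OF Y] D card_Y] .
  hence "is_p_set p ((\<lambda>x. N #> x) ` Y)"
    unfolding is_p_set_def using divides_primepow_nat[OF p] by blast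
  hence "(\<lambda>x. N #> x) ` Y \<subseteq> O_p p (G Mod N)"
    using Q.normal_p_set_subset_O_p[OF p rcos_image_normal[OF N Y]] by blast
  thus ?thesis using subset_Union_rcos_image[OF N normal_imp_subgroup[OF Y]] by blast
qed

lemma subset_Union_O_p'_FactGroup:
  assumes p: "Factorial_Ring.prime p" and N: "N \<lhd> G" and Y: "Y \<lhd> G"
    and D: "subgroup D G" "D \<subseteq> Y \<inter> N" and card_Y: "card Y = card D * m" and m: "\<not> p dvd m"
  shows "Y \<subseteq> \<Union> (O_p' p (G Mod N))"
proof -
  interpret Q: finite_group "G Mod N" using finite_group_FactGroup N by blast
  have "card ((\<lambda>x. N #> x) ` Y) dvd m"
    using card_rcos_image_dvd[OF N normal_imp_subgroup[OF Y] D card_Y] .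
  hence "is_p'_set p ((\<lambda>x. N #> x) ` Y)" unfolding is_p'_set_def using m dvd_trans by blast
  hence "(\<lambda>x. N #> x) ` Y \<subseteq> O_p' p (G Mod N)"
    using Q.normal_p'_set_subset_O_p'[OF p rcos_image_normal[OF N Y]] by blast
  thus ?thesis using subset_Union_rcos_image[OF N normal_imp_subgroup[OF Y]] by blast
qed

lemma O_p'p_normal: "Factorial_Ring.prime p \<Longrightarrow> O_p'p p G \<lhd> G"
  unfolding O_p'p_def
  using normal.factgroup_subgroup_union_normal O_p'_normal
    finite_group.O_p_normal finite_group_FactGroup by blast

lemma O_p'pp'_normal: "Factorial_Ring.prime p \<Longrightarrow> O_p'pp' p G \<lhd> G"
  unfolding O_p'pp'_def
  using normal.factgroup_subgroup_union_normal O_p'p_normal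
    finite_group.O_p'_normal finite_group_FactGroup by blast

definition p'pp'p_series_from :: "nat \<Rightarrow> 'a set \<Rightarrow> bool" where
  "p'pp'p_series_from p K \<longleftrightarrow> (\<exists>A B C. A \<lhd> G \<and> B \<lhd> G \<and> C \<lhd> G \<and> K \<subseteq> A \<and> A \<subseteq> B \<and> B \<subseteq> C \<and>
     (\<exists>m. \<not> p dvd m \<and> card A = card K * m) \<and> (\<exists>k. card B = card A * p ^ k) \<and>
     (\<exists>m. \<not> p dvd m \<and> card C = card B * m) \<and> (\<exists>k. card (carrier G) = card C * p ^ k))"

lemma p'pp'p_series_fromI:
  assumes "A \<lhd> G" "B \<lhd> G" "C \<lhd> G" "K \<subseteq> A" "A \<subseteq> B" "B \<subseteq> C"
    and "\<not> p dvd m" "card A = card K * m" "card B = card A * p ^ k"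
    and "\<not> p dvd m'" "card C = card B * m'" "card (carrier G) = card C * p ^ k'"
  shows "p'pp'p_series_from p K"
  unfolding p'pp'p_series_from_def using assms by blast

lemma p'pp'p_series_fromE:
  assumes "p'pp'p_series_from p K"
  obtains A B C m k m' k' where "A \<lhd> G" "B \<lhd> G" "C \<lhd> G" "K \<subseteq> A" "A \<subseteq> B" "B \<subseteq> C"
    "\<not> p dvd m" "card A = card K * m" "card B = card A * p ^ k"
    "\<not> p dvd m'" "card C = card B * m'" "card (carrier G) = card C * p ^ k'"
  using assms unfolding p'pp'p_series_from_def by blast

lemma p'pp'p_series_from_subset:
  assumes "p'pp'p_series_from p Y" "K \<subseteq> Y" "card Y = card K * m" "\<not> p dvd m"
    and "Factorial_Ring.prime p"
  shows "p'pp'p_series_from p K"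
proof -
  obtain A B C m1 k m' k' where "A \<lhd> G" "B \<lhd> G" "C \<lhd> G" "Y \<subseteq> A" "A \<subseteq> B" "B \<subseteq> C"
    "\<not> p dvd m1" "card A = card Y * m1" "card B = card A * p ^ k"
    "\<not> p dvd m'" "card C = card B * m'" "card (carrier G) = card C * p ^ k'"
    using assms(1) by (rule p'pp'p_series_fromE)
  moreover have "\<not> p dvd m * m1" using assms(4,5) \<open>\<not> p dvd m1\<close> prime_dvd_mult_iff by blast
  ultimately show ?thesis
    using assms(2,3) by (intro p'pp'p_series_fromI[of A B C K p "m * m1" k m' k']) (auto simp: ac_simps)
qed

lemma O_p'pp'p_eq_carrier:
  assumes p: "Factorial_Ring.prime p" and "p'pp'p_series_from p {\<one>}"
  shows "O_p'pp'p p G = carrier G"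
proof -
  obtain A B C m k m' k' where ABC: "A \<lhd> G" "B \<lhd> G" "C \<lhd> G" "A \<subseteq> B" "B \<subseteq> C"
    and A: "\<not> p dvd m" "card A = card {\<one>} * m" and B: "card B = card A * p ^ k"
    and C: "\<not> p dvd m'" "card C = card B * m'" and G: "card (carrier G) = card C * p ^ k'"
    using assms(2) unfolding p'pp'p_series_from_def by blast
  have "A \<subseteq> O_p' p G" using normal_p'_set_subset_O_p'[OF p ABC(1)] A by (simp add: is_p'_set_def)
  hence "B \<subseteq> O_p'p p G"
    unfolding O_p'p_def using subset_Union_O_p_FactGroup[OF p O_p'_normal[OF p] ABC(2)]
      normal_imp_subgroup[OF ABC(1)] ABC(4) B by blast
  hence "C \<subseteq> O_p'pp' p G"
    unfolding O_p'pp'_def using subset_Union_O_p'_FactGroup[OF p O_p'p_normal[OF p] ABC(3)]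
      normal_imp_subgroup[OF ABC(2)] ABC(5) C by blast
  hence "carrier G \<subseteq> O_p'pp'p p G"
    unfolding O_p'pp'p_def using subset_Union_O_p_FactGroup[OF p O_p'pp'_normal[OF p] normal_self]
      normal_imp_subgroup[OF ABC(3)] subgroup.subset G by blast
  moreover have "O_p'pp'p p G \<subseteq> carrier G"
  proof -
    let ?N = "O_p'pp' p G"
    have "O_p p (G Mod ?N) \<subseteq> carrier (G Mod ?N)"
      using finite_group.O_p_normal[OF finite_group_FactGroup[OF O_p'pp'_normal[OF p]] p]
        normal_imp_subgroup subgroup.subset by blast
    hence "\<Union> (O_p p (G Mod ?N)) \<subseteq> \<Union> (rcosets ?N)" unfolding FactGroup_def by auto
    thus ?thesis
      unfolding O_p'pp'p_def using rcosets_part_G O_p'pp'_normal[OF p] normal_imp_subgroup by metis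
  qed
  ultimately show ?thesis by blast
qed

section \<open>Minimal normal subgroups of solvable groups\<close>

definition minimal_normal_over :: "'a set \<Rightarrow> 'a set \<Rightarrow> bool" where
  "minimal_normal_over K N \<longleftrightarrow> N \<lhd> G \<and> K \<subset> N \<and> (\<forall>Y. Y \<lhd> G \<and> K \<subseteq> Y \<and> Y \<subseteq> N \<longrightarrow> Y = K \<or> Y = N)"

lemma ex_minimal_normal_over:
  assumes "A \<lhd> G" "K \<subset> A"
  obtains N where "minimal_normal_over K N" "N \<subseteq> A"
proof -
  have "\<exists>N. (N \<lhd> G \<and> K \<subset> N \<and> N \<subseteq> A) \<and>
      (\<forall>Y. Y \<lhd> G \<and> K \<subset> Y \<and> Y \<subseteq> A \<longrightarrow> card N \<le> card Y)"
    by (rule ex_has_least_nat) (use assms in blast)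
  then obtain N where N: "N \<lhd> G" "K \<subset> N" "N \<subseteq> A"
    and N_min: "\<And>Y. Y \<lhd> G \<Longrightarrow> K \<subset> Y \<Longrightarrow> Y \<subseteq> A \<Longrightarrow> card N \<le> card Y" by blast
  have minimal: "Y = K \<or> Y = N" if Y: "Y \<lhd> G" "K \<subseteq> Y" "Y \<subseteq> N" for Y
  proof (cases "Y = K")
    case False
    hence "card N \<le> card Y" using N_min Y N(3) by blast
    thus ?thesis using subgroup_eq_if_card_le[OF normal_imp_subgroup[OF N(1)] Y(3)] by simp
  qed simp
  have "minimal_normal_over K N"
    unfolding minimal_normal_over_def using N(1,2) minimal by blast
  thus thesis using that N(3) by blast
qed

lemma derived_neq_if_solvable:
  assumes "solvable G" and V: "subgroup V G" "V \<noteq> {\<one>}"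
  shows "derived G V \<noteq> V"
proof
  assume fixed: "derived G V = V"
  have "(derived G ^^ n) V = V" for n by (induct n) (simp_all add: fixed)
  moreover obtain n where "(derived G ^^ n) (carrier G) = {\<one>}"
    using assms(1) solvable_iff_trivial_derived_seq by blast
  ultimately have "V \<subseteq> {\<one>}" using mono_exp_of_derived[OF subgroup.subset[OF V(1)]] by metis
  thus False using V(2) subgroup.one_closed[OF V(1)] by blast
qed

lemma minimal_normal_over_one_commute:
  assumes solvable: "solvable G" and V: "minimal_normal_over {\<one>} V" and vw: "v \<in> V" "w \<in> V"
  shows "v \<otimes> w = w \<otimes> v"
proof -
  have VN: "V \<lhd> G" and VS: "subgroup V G" and V1: "V \<noteq> {\<one>}"
    and V_min: "\<And>U. U \<lhd> G \<Longrightarrow> U \<subseteq> V \<Longrightarrow> U = {\<one>} \<or> U = V"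
    using V normal_imp_subgroup one_is_normal
    unfolding minimal_normal_over_def by (blast dest: subgroup.one_closed)+
  have derived_one: "derived G V = {\<one>}"
    using V_min[OF derived_is_normal[OF VN] derived_incl[OF _ VS]] derived_neq_if_solvable[OF solvable VS V1]
    by blast
  have vG: "v \<in> carrier G" and wG: "w \<in> carrier G"
    using subgroup.mem_carrier[OF VS vw(1)] subgroup.mem_carrier[OF VS vw(2)] by auto
  have "v \<otimes> w \<otimes> inv v \<otimes> inv w \<in> derived G V"
    unfolding derived_def using vw by (blast intro: generate.incl)
  hence "v \<otimes> w \<otimes> inv v \<otimes> inv w = \<one>" using derived_one by blast
  moreover have "v \<otimes> w = v \<otimes> w \<otimes> inv v \<otimes> inv w \<otimes> (w \<otimes> v)"
    using vG wG by (simp add: m_assoc)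
  ultimately show ?thesis using vG wG by simp
qed

lemma torsion_subgroup_normal:
  assumes V: "V \<lhd> G" and comm: "\<And>v w. v \<in> V \<Longrightarrow> w \<in> V \<Longrightarrow> v \<otimes> w = w \<otimes> v"
  shows "{v \<in> V. v [^] (n::nat) = \<one>} \<lhd> G"
  unfolding normal_inv_iff
proof (intro conjI ballI)
  have VS: "subgroup V G" and VG: "V \<subseteq> carrier G"
    using V normal_imp_subgroup subgroup.subset by blast+
  show "subgroup {v \<in> V. v [^] n = \<one>} G"
  proof (rule subgroupI)
    fix v w assume "v \<in> {v \<in> V. v [^] n = \<one>}" "w \<in> {v \<in> V. v [^] n = \<one>}"
    moreover have "(v \<otimes> w) [^] n = v [^] n \<otimes> w [^] n"
      using \<open>v \<in> {v \<in> V. v [^] n = \<one>}\<close> \<open>w \<in> {v \<in> V. v [^] n = \<one>}\<close>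
        pow_mult_distrib[OF comm] VG by blast
    ultimately show "v \<otimes> w \<in> {v \<in> V. v [^] n = \<one>}" using VG subgroup.m_closed[OF VS] by auto
  qed (use VG subgroup.one_closed[OF VS] subgroup.m_inv_closed[OF VS] in \<open>auto simp: nat_pow_inv\<close>)
  fix g v assume g: "g \<in> carrier G" and v: "v \<in> {v \<in> V. v [^] n = \<one>}"
  thus "g \<otimes> v \<otimes> inv g \<in> {v \<in> V. v [^] n = \<one>}"
    using V VG conj_pow normal_inv_iff by auto
qed

text \<open>A prime \<open>q \<noteq> r\<close> dividing \<open>|V|\<close> would give, via a Sylow \<open>q\<close>-subgroup, an element whose
  order divides both a power of \<open>q\<close> and \<open>r\<^sup>a\<close>.\<close>
lemma card_prime_power_if_pow_eq_one:
  assumes V: "subgroup V G" and r: "Factorial_Ring.prime r"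
    and exponent: "\<And>v. v \<in> V \<Longrightarrow> v [^] (r ^ a) = \<one>"
  shows "\<exists>b. card V = r ^ b"
proof -
  have only_r: "q = r" if q: "Factorial_Ring.prime q" "q dvd card V" for q
  proof (rule ccontr)
    assume "q \<noteq> r"
    define b where "b = multiplicity q (card V)"
    obtain m where m: "card V = q ^ b * m" "\<not> q dvd m"
      using multiplicity_decompose'[of "card V" q] card_subgroup_pos[OF V] q(1) not_prime_unit
      unfolding b_def by (metis less_not_refl2)
    have "b > 0"
    proof (rule ccontr)
      assume "\<not> b > 0"
      hence "card V = m" using m by simp
      thus False using q(2) m(2) by simp
    qed
    obtain Q where Q: "subgroup Q G" "Q \<subseteq> V" "card Q = q ^ b"
      using ex_sylow_subgroup_of_subgroup[OF V q(1) m(1)] by blast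
    have "card Q \<noteq> 1" using Q(3) one_less_power[OF prime_gt_1_nat[OF q(1)] \<open>b > 0\<close>] by linarith
    hence "Q \<noteq> {\<one>}" by auto
    then obtain x where x: "x \<in> Q" "x \<noteq> \<one>" using subgroup.one_closed[OF Q(1)] by blast
    have xG: "x \<in> carrier G" using subgroup.mem_carrier[OF V] x(1) Q(2) by blast
    have "ord x dvd q ^ b" using pow_card_subgroup_eq_one[OF Q(1) x(1)] Q(3) pow_eq_id[OF xG] by simp
    moreover have "ord x dvd r ^ a" using exponent x Q(2) pow_eq_id[OF xG] by blast
    moreover have "coprime (q ^ b) (r ^ a)" using primes_coprime[OF q(1) r \<open>q \<noteq> r\<close>] by simp
    ultimately have "ord x = 1" using coprime_common_divisor_nat by blast
    thus False using x ord_eq_1 xG by blast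
  qed
  obtain m where m: "card V = r ^ multiplicity r (card V) * m" "\<not> r dvd m"
    using multiplicity_decompose'[of "card V" r] card_subgroup_pos[OF V] r not_prime_unit
    by (metis less_not_refl2)
  have "m = 1"
  proof (rule ccontr)
    assume "m \<noteq> 1"
    then obtain q where "Factorial_Ring.prime q" "q dvd m" using prime_factor_nat by blast
    thus False using only_r m by (metis dvd_mult)
  qed
  thus ?thesis using m(1) by auto
qed

text \<open>For a prime \<open>r\<close> dividing \<open>|V|\<close> with \<open>r\<close>-part \<open>r\<^sup>a\<close>, the elements of the abelian group
  \<open>V\<close> killed by \<open>r\<^sup>a\<close> form a nontrivial normal subgroup, hence all of \<open>V\<close>.\<close>
lemma card_minimal_normal_over_one:
  assumes solvable: "solvable G" and V: "minimal_normal_over {\<one>} V"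
  shows "\<exists>r k. Factorial_Ring.prime r \<and> k > 0 \<and> card V = r ^ k"
proof -
  have VN: "V \<lhd> G" and VS: "subgroup V G" and V1: "V \<noteq> {\<one>}"
    and V_min: "\<And>U. U \<lhd> G \<Longrightarrow> U \<subseteq> V \<Longrightarrow> U = {\<one>} \<or> U = V"
    using V normal_imp_subgroup one_is_normal
    unfolding minimal_normal_over_def by (blast dest: subgroup.one_closed)+
  have "card V \<noteq> 1"
    using V1 subgroup.one_closed[OF VS] card_1_singletonE by (metis singletonD)
  then obtain r where r: "Factorial_Ring.prime r" "r dvd card V" using prime_factor_nat by blast
  define a where "a = multiplicity r (card V)"
  obtain m where m: "card V = r ^ a * m"
    using multiplicity_decompose'[of "card V" r] card_subgroup_pos[OF VS] r(1) not_prime_unit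
    unfolding a_def by (metis less_not_refl2)
  obtain P where P: "subgroup P G" "P \<subseteq> V" "card P = r ^ a"
    using ex_sylow_subgroup_of_subgroup[OF VS r(1) m] by blast
  let ?U = "{v \<in> V. v [^] (r ^ a) = \<one>}"
  have "P \<subseteq> ?U" using P(2,3) pow_card_subgroup_eq_one[OF P(1)] by auto
  moreover have "P \<noteq> {\<one>}"
  proof
    assume "P = {\<one>}"
    hence "r ^ a = 1" using P(3) by simp
    hence "\<not> r dvd card V"
      using multiplicity_decompose'[of "card V" r] card_subgroup_pos[OF VS] r(1) not_prime_unit
      unfolding a_def by (metis less_not_refl2 mult_1)
    thus False using r(2) by blast
  qed
  ultimately have "?U \<noteq> {\<one>}" using subgroup.one_closed[OF P(1)] by blast
  hence "?U = V"
    using V_min torsion_subgroup_normal[OF VN minimal_normal_over_one_commute[OF solvable V]] by blast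
  then obtain b where "card V = r ^ b"
    using card_prime_power_if_pow_eq_one[OF VS r(1), of a] by blast
  moreover have "b > 0" using \<open>card V \<noteq> 1\<close> \<open>card V = r ^ b\<close> by (cases b) auto
  ultimately show ?thesis using r(1) by blast
qed

lemma solvable_FactGroup:
  assumes "solvable G" "K \<lhd> G"
  shows "solvable (G Mod K)"
proof -
  have "group_hom G (G Mod K) (\<lambda>x. K #> x)"
    using assms(2) normal.r_coset_hom_Mod normal.factorgroup_is_group
    unfolding group_hom_def group_hom_axioms_def by (metis is_group)
  thus ?thesis
    using group_hom.surj_hom_imp_solvable assms(1) by (fastforce simp: carrier_FactGroup)
qed

lemma minimal_normal_over_FactGroup:
  assumes K: "K \<lhd> G" and W: "minimal_normal_over K W"
  shows "finite_group.minimal_normal_over (G Mod K) {\<one>\<^bsub>G Mod K\<^esub>} ((\<lambda>x. K #> x) ` W)"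
proof -
  have WN: "W \<lhd> G" and KW: "K \<subset> W"
    and W_min: "\<And>Y. Y \<lhd> G \<Longrightarrow> K \<subseteq> Y \<Longrightarrow> Y \<subseteq> W \<Longrightarrow> Y = K \<or> Y = W"
    using W unfolding minimal_normal_over_def by blast+
  have KS: "subgroup K G" and WS: "subgroup W G" using K WN normal_imp_subgroup by auto
  interpret Q: finite_group "G Mod K" using finite_group_FactGroup K by blast
  let ?V = "(\<lambda>x. K #> x) ` W"
  have cosets_in_W: "K #> w \<subseteq> W" if "w \<in> W" for w
    using that KW WS unfolding r_coset_def by (auto intro: subgroup.m_closed)
  show ?thesis
    unfolding Q.minimal_normal_over_def
  proof (intro conjI allI impI)
    show "?V \<lhd> G Mod K" using rcos_image_normal K WN by blast
    obtain w where w: "w \<in> W" "w \<notin> K" using KW by blast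
    have "K #> w \<noteq> K" using rcos_self[OF _ KS] w WS subgroup.mem_carrier by metis
    hence "?V \<noteq> {K}" using w by blast
    moreover have "K \<in> ?V"
      using coset_mult_one[OF subgroup.subset[OF KS]] subgroup.one_closed[OF WS] by force
    ultimately show "{\<one>\<^bsub>G Mod K\<^esub>} \<subset> ?V" by (auto simp: FactGroup_def)
  next
    fix U assume "U \<lhd> G Mod K \<and> {\<one>\<^bsub>G Mod K\<^esub>} \<subseteq> U \<and> U \<subseteq> ?V"
    hence U: "U \<lhd> G Mod K" "K \<in> U" "U \<subseteq> ?V" by auto
    have "\<Union>U \<lhd> G" using normal.factgroup_subgroup_union_normal[OF K U(1)] .
    moreover have "K \<subseteq> \<Union>U" "\<Union>U \<subseteq> W" using U(2,3) cosets_in_W by blast+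
    ultimately consider "\<Union>U = K" | "\<Union>U = W" using W_min by blast
    thus "U = {\<one>\<^bsub>G Mod K\<^esub>} \<or> U = ?V"
    proof cases
      case 1
      have "u = K" if "u \<in> U" for u
      proof -
        obtain w where w: "w \<in> W" "u = K #> w" using U(3) \<open>u \<in> U\<close> by blast
        have wG: "w \<in> carrier G" using w WS subgroup.mem_carrier by metis
        have "w \<in> K" using 1 \<open>u \<in> U\<close> w rcos_self[OF wG KS] by blast
        thus ?thesis using coset_join2[OF wG KS] w by simp
      qed
      hence "U = {K}" using U(2) by blast
      thus ?thesis by (simp add: FactGroup_def)
    next
      case 2
      have "K #> w \<in> U" if w: "w \<in> W" for w
      proof -
        obtain u where u: "u \<in> U" "w \<in> u" using 2 w by blast
        obtain w' where w': "w' \<in> W" "u = K #> w'" using U(3) u(1) by blast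
        have "K #> w' = K #> w"
          using repr_independence[OF _ _ KS] u w' WS subgroup.mem_carrier by metis
        thus ?thesis using u w' by simp
      qed
      thus ?thesis using U(3) by blast
    qed
  qed
qed

lemma card_minimal_normal_over:
  assumes solvable: "solvable G" and K: "K \<lhd> G" and W: "minimal_normal_over K W"
  shows "\<exists>r k. Factorial_Ring.prime r \<and> k > 0 \<and> card W = card K * r ^ k"
proof -
  interpret Q: finite_group "G Mod K" using finite_group_FactGroup K by blast
  have WS: "subgroup W G" and "K \<subseteq> W"
    using W normal_imp_subgroup unfolding minimal_normal_over_def by blast+
  obtain r k where "Factorial_Ring.prime r" "k > 0" "card ((\<lambda>x. K #> x) ` W) = r ^ k"
    using Q.card_minimal_normal_over_one[OF solvable_FactGroup[OF solvable K]
        minimal_normal_over_FactGroup[OF K W]] by blast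
  moreover have "card ((\<lambda>x. K #> x) ` W) * card K = card W"
    using card_rcos_image_mult_card_Int[OF K WS] \<open>K \<subseteq> W\<close> by (simp add: Int_absorb1)
  ultimately show ?thesis by (metis mult.commute)
qed

section \<open>Building the series from the bottom\<close>

lemma set_mult_normal_of_normal_in_supplement:
  assumes N: "N \<lhd> G" and M: "subgroup M G" and NM: "N <#> M = carrier G"
    and H: "H \<lhd> G\<lparr>carrier := M\<rparr>"
  shows "N <#> H \<lhd> G"
  unfolding normal_inv_iff
proof (intro conjI ballI)
  interpret M: group "G\<lparr>carrier := M\<rparr>" using subgroup_imp_group[OF M] .
  have HM: "subgroup H (G\<lparr>carrier := M\<rparr>)" using H normal_imp_subgroup by blast
  have HS: "subgroup H G" using incl_subgroup[OF M HM] .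
  have NS: "subgroup N G" using N normal_imp_subgroup by blast
  show "subgroup (N <#> H) G" using mult_norm_subgroup[OF N HS] .
  have conj_H: "m \<otimes> x \<otimes> inv m \<in> H" if "m \<in> M" "x \<in> H" for m x
    using H M.normal_inv_iff that m_inv_consistent[OF M] by fastforce
  fix g c assume g: "g \<in> carrier G" and c: "c \<in> N <#> H"
  obtain n m where nm: "n \<in> N" "m \<in> M" "g = n \<otimes> m" using g NM unfolding set_mult_def by blast
  obtain n' x where nx: "n' \<in> N" "x \<in> H" "c = n' \<otimes> x" using c unfolding set_mult_def by blast
  have carr: "n \<in> carrier G" "m \<in> carrier G" "n' \<in> carrier G" "x \<in> carrier G"
    using nm nx NS M HS subgroup.mem_carrier by metis+
  define x' where "x' = m \<otimes> x \<otimes> inv m"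
  have x': "x' \<in> H" "x' \<in> carrier G" unfolding x'_def using conj_H nm nx carr by auto
  have "n \<otimes> (m \<otimes> n' \<otimes> inv m) \<otimes> (x' \<otimes> inv n \<otimes> inv x') \<in> N"
    using nm(1) normal_inv_iff[of N] N carr x' nx(1) NS
    by (metis subgroup.m_closed subgroup.m_inv_closed)
  moreover have "g \<otimes> c \<otimes> inv g = (n \<otimes> (m \<otimes> n' \<otimes> inv m) \<otimes> (x' \<otimes> inv n \<otimes> inv x')) \<otimes> x'"
    using carr x' unfolding nm(3) nx(3) x'_def by (simp add: m_assoc inv_mult_group)
  ultimately show "g \<otimes> c \<otimes> inv g \<in> N <#> H" using x'(1) unfolding set_mult_def by blast
qed

text \<open>With \<open>H\<close> the normal Hall \<open>2'\<close>-subgroup of \<open>M\<close>, the series is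
  \<open>K \<subseteq> K \<subseteq> N \<subseteq> NH \<subseteq> G\<close>.\<close>
lemma p'pp'p_series_from_if_two_nilpotent_maximal:
  assumes K: "K \<lhd> G" and N: "N \<lhd> G" "K \<subseteq> N" and card_N: "card N = card K * 2 ^ k"
    and M: "maximal_subgroup M G" "\<not> N \<subseteq> M" and "two_nilpotent (G\<lparr>carrier := M\<rparr>)"
  shows "p'pp'p_series_from 2 K"
proof -
  have MS: "subgroup M G" using M unfolding maximal_subgroup_def by blast
  have NS: "subgroup N G" using N normal_imp_subgroup by blast
  have NM: "N <#> M = carrier G" using set_mult_eq_carrier_if_maximal N(1) M by blast
  obtain H j where H: "H \<lhd> G\<lparr>carrier := M\<rparr>" "odd (card H)" "card M = card H * 2 ^ j"
    using assms(7) unfolding two_nilpotent_def by auto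
  have HM: "subgroup H (G\<lparr>carrier := M\<rparr>)" using H(1) normal_imp_subgroup by blast
  have HS: "subgroup H G" and "H \<subseteq> M"
    using incl_subgroup[OF MS HM] subgroup.subset[OF HM] by auto
  let ?C = "N <#> H"
  have C: "?C \<lhd> G" using set_mult_normal_of_normal_in_supplement[OF N(1) MS NM H(1)] .
  have CS: "subgroup ?C G" using C normal_imp_subgroup by blast
  have "N \<subseteq> ?C" "H \<subseteq> ?C"
    using subset_set_mult_subgroup_right[OF HS subgroup.subset[OF NS]]
      subset_set_mult_subgroup_left[OF NS subgroup.subset[OF HS]] by auto
  txt \<open>\<open>|C : N| = |H : N \<inter> H|\<close> is odd.\<close>
  obtain u where u: "card H = card (N \<inter> H) * u"
    using card_subgroup_dvd[OF subgroups_Inter_pair[OF NS HS] HS] by blast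
  have "card ?C * card (N \<inter> H) = card N * card H" by (rule card_set_mult_mult_card_Int[OF NS HS])
  also have "\<dots> = card N * u * card (N \<inter> H)" unfolding u by (simp only: ac_simps)
  finally have "card ?C * card (N \<inter> H) = card N * u * card (N \<inter> H)" .
  hence card_C: "card ?C = card N * u"
    using card_subgroup_pos[OF subgroups_Inter_pair[OF NS HS]] by auto
  txt \<open>\<open>|G : C|\<close> divides \<open>|M : H| = 2\<^sup>j\<close>, since \<open>CM = G\<close> and \<open>H \<subseteq> C \<inter> M\<close>.\<close>
  have "carrier G \<subseteq> ?C <#> M" using NM mono_set_mult[OF \<open>N \<subseteq> ?C\<close>, of M M] by blast
  hence CM: "?C <#> M = carrier G"
    using setmult_subset_G[OF subgroup.subset[OF CS] subgroup.subset[OF MS]] by blast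
  obtain t where t: "card (?C \<inter> M) = card H * t"
    using card_subgroup_dvd[OF HS subgroups_Inter_pair[OF CS MS]] \<open>H \<subseteq> ?C\<close> \<open>H \<subseteq> M\<close> by blast
  obtain v where v: "card (carrier G) = card ?C * v" using card_subgroup_dvd_order[OF CS] by blast
  have "card H * (card ?C * (v * t)) = card H * (card ?C * 2 ^ j)"
    using card_set_mult_mult_card_Int[OF CS MS] CM t H(3) v by (simp add: ac_simps)
  hence "v * t = 2 ^ j" using card_subgroup_pos[OF HS] card_subgroup_pos[OF CS] by simp
  hence "v dvd 2 ^ j" by (metis dvd_triv_left)
  then obtain j' where "v = 2 ^ j'" using divides_primepow_nat[OF two_is_prime_nat] by blast
  show ?thesis
    by (rule p'pp'p_series_fromI[OF K N(1) C order_refl N(2) \<open>N \<subseteq> ?C\<close>, of 2 1 k u j'])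
      (use card_N card_C v \<open>v = 2 ^ j'\<close> u H(2) in auto)
qed

lemma commutator_mem_if_index_two:
  assumes K: "K \<lhd> G" and N: "N \<lhd> G" "K \<subseteq> N" and card_N: "card N = 2 * card K"
    and n: "n \<in> N" and y: "y \<in> carrier G"
  shows "n \<otimes> y \<otimes> inv n \<otimes> inv y \<in> K"
proof -
  have KS: "subgroup K G" and NS: "subgroup N G" using K N normal_imp_subgroup by auto
  have nG: "n \<in> carrier G" using n NS subgroup.mem_carrier by metis
  let ?z = "y \<otimes> inv n \<otimes> inv y"
  have split: "n \<otimes> y \<otimes> inv n \<otimes> inv y = n \<otimes> ?z" using nG y by (simp add: m_assoc)
  show ?thesis
  proof (cases "n \<in> K")
    case True
    hence "?z \<in> K" using K y KS subgroup.m_inv_closed normal_inv_iff by metis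
    thus ?thesis using split True KS subgroup.m_closed by metis
  next
    case False
    have inv_n: "inv n \<in> N" "inv n \<notin> K"
      using n False NS KS nG subgroup.m_inv_closed inv_inv by metis+
    have "?z \<in> N" using N(1) y inv_n(1) normal_inv_iff by blast
    moreover have "?z \<notin> K"
    proof
      assume "?z \<in> K"
      hence "inv y \<otimes> ?z \<otimes> inv (inv y) \<in> K" using K inv_closed[OF y] normal_inv_iff by blast
      thus False using y nG inv_n(2) by (simp add: m_assoc)
    qed
    ultimately have "?z \<otimes> inv (inv n) \<in> K" using index_two_coset[OF KS NS N(2) card_N] inv_n by blast
    hence "n \<otimes> (?z \<otimes> n) \<otimes> inv n \<in> K" using K nG normal_inv_iff by simp
    thus ?thesis using split nG y by (simp add: m_assoc)
  qed
qed

lemma Int_normal_if_supplement: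
  assumes Y: "Y \<lhd> G" and M: "subgroup M G" and N: "N \<subseteq> carrier G" and NM: "N <#> M = carrier G"
    and conj_N: "\<And>n y. n \<in> N \<Longrightarrow> y \<in> Y \<inter> M \<Longrightarrow> n \<otimes> y \<otimes> inv n \<in> Y \<inter> M"
  shows "Y \<inter> M \<lhd> G"
  unfolding normal_inv_iff
proof (intro conjI subgroups_Inter_pair[OF normal_imp_subgroup[OF Y] M] ballI)
  fix g y assume g: "g \<in> carrier G" and y: "y \<in> Y \<inter> M"
  obtain n m where nm: "n \<in> N" "m \<in> M" "g = n \<otimes> m" using g NM unfolding set_mult_def by blast
  have carr: "n \<in> carrier G" "m \<in> carrier G" "y \<in> carrier G"
    using nm y N M subgroup.mem_carrier by (auto dest: subgroup.mem_carrier)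
  have "m \<otimes> y \<otimes> inv m \<in> Y" using Y carr(2) y normal_inv_iff by blast
  moreover have "m \<otimes> y \<otimes> inv m \<in> M"
    using M nm(2) y by (meson IntD2 subgroup.m_closed subgroup.m_inv_closed)
  ultimately have "n \<otimes> (m \<otimes> y \<otimes> inv m) \<otimes> inv n \<in> Y \<inter> M" using conj_N nm(1) by blast
  thus "g \<otimes> y \<otimes> inv g \<in> Y \<inter> M" using carr unfolding nm(3) by (simp add: m_assoc inv_mult_group)
qed

lemma index_eq_two_if_prime:
  assumes M: "subgroup M G" and N: "subgroup N G" and NM: "N <#> M = carrier G"
    and K: "subgroup K G" "K \<subseteq> N \<inter> M" and card_N: "card N = card K * 2 ^ k"
    and prime: "Factorial_Ring.prime (card (rcosets M))"
  shows "card (rcosets M) = 2" "card N = 2 * card (N \<inter> M)"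
proof -
  let ?q = "card (rcosets M)"
  have "card (carrier G) * card (N \<inter> M) = card N * card M"
    using card_set_mult_mult_card_Int[OF N M] NM by simp
  moreover have "card (carrier G) = ?q * card M" using lagrange[OF M] by (simp add: order_def)
  ultimately have "card M * (?q * card (N \<inter> M)) = card M * card N" by (simp only: ac_simps)
  hence q_N: "?q * card (N \<inter> M) = card N" using card_subgroup_pos[OF M] by simp
  obtain t where "card (N \<inter> M) = card K * t"
    using card_subgroup_dvd[OF K(1) subgroups_Inter_pair[OF N M] K(2)] by blast
  hence "card K * (?q * t) = card K * 2 ^ k" using q_N card_N by (simp add: ac_simps)
  hence "?q * t = 2 ^ k" using card_subgroup_pos[OF K(1)] by simp
  hence "?q dvd 2" using prime_dvd_power_nat[OF prime] by (metis dvd_triv_left)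
  thus "?q = 2" using prime_ge_2_nat[OF prime] by (simp add: dvd_imp_le le_antisym)
  thus "card N = 2 * card (N \<inter> M)" using q_N by simp
qed

text \<open>If \<open>M\<close> has prime index, that index is \<open>|N : N \<inter> M| = 2\<close>; minimality of \<open>N\<close> forces
  \<open>N \<inter> M = K\<close>, so \<open>N / K\<close> is central of order two and \<open>A \<inter> M\<close> is normal of odd index
  \<open>|A : N|\<close> over \<open>K\<close>.\<close>
lemma ex_odd_index_normal_over_if_prime_index_maximal:
  assumes K: "K \<lhd> G" and N: "minimal_normal_over K N" and card_N: "card N = card K * 2 ^ k"
    and M: "maximal_subgroup M G" "K \<subseteq> M" "\<not> N \<subseteq> M" and prime: "Factorial_Ring.prime (card (rcosets M))"
    and A: "A \<lhd> G" "N \<subset> A" and card_A: "card A = card N * m" and "odd m"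
  shows "\<exists>Y. Y \<lhd> G \<and> K \<subset> Y \<and> (\<exists>m. odd m \<and> card Y = card K * m)"
proof -
  have NN: "N \<lhd> G" "K \<subset> N" using N unfolding minimal_normal_over_def by blast+
  have MS: "subgroup M G" using M unfolding maximal_subgroup_def by blast
  have NS: "subgroup N G" and KS: "subgroup K G" and AS: "subgroup A G"
    using NN K A normal_imp_subgroup by auto
  have NG: "N \<subseteq> carrier G" using NS subgroup.subset by blast
  have NM: "N <#> M = carrier G" using set_mult_eq_carrier_if_maximal NN(1) M by blast
  have "K \<subseteq> N \<inter> M" using NN(2) M(2) by blast
  note index_two = index_eq_two_if_prime[OF MS NS NM KS this card_N prime]
  have "N \<inter> M \<lhd> G"
    using Int_normal_if_supplement[OF NN(1) MS NG NM]
      index_two_normal[OF subgroups_Inter_pair[OF NS MS] NS _ index_two(2)] by blast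
  hence "N \<inter> M = K" using N M(2,3) NN(2) unfolding minimal_normal_over_def by blast
  hence card_N_K: "card N = 2 * card K" using index_two(2) by simp
  have "K \<subseteq> A \<inter> M" using NN(2) A(2) M(2) by blast
  have "n \<otimes> y \<otimes> inv n \<in> A \<inter> M" if n: "n \<in> N" and y: "y \<in> A \<inter> M" for n y
  proof -
    have carr: "n \<in> carrier G" "y \<in> carrier G" using n y NG AS subgroup.mem_carrier by auto
    have "n \<otimes> y \<otimes> inv n \<otimes> inv y \<in> A \<inter> M"
      using commutator_mem_if_index_two[OF K NN(1) _ card_N_K n carr(2)] NN(2) \<open>K \<subseteq> A \<inter> M\<close> by blast
    hence "(n \<otimes> y \<otimes> inv n \<otimes> inv y) \<otimes> y \<in> A \<inter> M"
      using y subgroups_Inter_pair[OF AS MS] subgroup.m_closed by metis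
    thus ?thesis using carr by (simp add: m_assoc)
  qed
  hence "A \<inter> M \<lhd> G" using Int_normal_if_supplement[OF A(1) MS NG NM] by blast
  moreover have "card (A \<inter> M) = card K * m"
  proof -
    have "carrier G \<subseteq> A <#> M" using NM mono_set_mult[of N A M M] A(2) by blast
    hence "A <#> M = carrier G"
      using setmult_subset_G[OF subgroup.subset[OF AS] subgroup.subset[OF MS]] by blast
    hence "2 * card M * card (A \<inter> M) = 2 * card K * m * card M"
      using card_set_mult_mult_card_Int[OF AS MS] lagrange[OF MS] index_two(1) card_A card_N_K
      by (simp add: order_def)
    thus ?thesis using card_subgroup_pos[OF MS] by (simp add: ac_simps)
  qed
  moreover have "K \<subset> A \<inter> M"
  proof -
    have "m \<noteq> 1"
    proof
      assume "m = 1"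
      hence "N = A" using subgroup_eq_if_card_le[OF AS] A(2) card_A by simp
      thus False using A(2) by blast
    qed
    hence "card (A \<inter> M) \<noteq> card K" using \<open>card (A \<inter> M) = card K * m\<close> card_subgroup_pos[OF KS] by simp
    thus ?thesis using \<open>K \<subseteq> A \<inter> M\<close> by blast
  qed
  ultimately show ?thesis using \<open>odd m\<close> by blast
qed

lemma set_mult_eq_if_sylow:
  assumes N: "N \<lhd> G" and W: "subgroup W G" "N \<subseteq> W" and r: "Factorial_Ring.prime r"
    and card_W: "card W = card N * r ^ l" "card W = r ^ a * m" and "\<not> r dvd m"
    and S: "subgroup S G" "S \<subseteq> W" "card S = r ^ a"
  shows "N <#> S = W"
proof -
  have NS: "subgroup N G" using N normal_imp_subgroup by blast
  have NS_S: "subgroup (N <#> S) G" using mult_norm_subgroup[OF N S(1)] .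
  have "N <#> S \<subseteq> W" using set_mult_subset_subgroup[OF W(1) W(2) S(2)] .
  then obtain v where v: "card W = card (N <#> S) * v" using card_subgroup_dvd[OF NS_S W(1)] by blast
  obtain i where "card (N <#> S) = r ^ a * i"
    using card_subgroup_dvd[OF S(1) NS_S subset_set_mult_subgroup_left[OF NS subgroup.subset[OF S(1)]]]
      S(3) by auto
  hence "r ^ a * (i * v) = r ^ a * m" using card_W(2) v by (simp add: mult.assoc)
  hence "v dvd m" using prime_gt_0_nat[OF r] by (metis dvd_triv_right mult_left_cancel not_gr0
        zero_less_power)
  obtain u where "card (N <#> S) = card N * u"
    using card_subgroup_dvd[OF NS NS_S subset_set_mult_subgroup_right[OF S(1) subgroup.subset[OF NS]]]
    by auto
  hence "card N * (u * v) = card N * r ^ l" using card_W(1) v by (simp add: mult.assoc)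
  hence "v dvd r ^ l" using card_subgroup_pos[OF NS] by (metis dvd_triv_right mult_left_cancel not_gr0)
  then obtain j where "v = r ^ j" using divides_primepow_nat[OF r] by blast
  hence "v = 1" using \<open>v dvd m\<close> \<open>\<not> r dvd m\<close> by (cases j) auto
  thus ?thesis using v \<open>N <#> S \<subseteq> W\<close> subgroup_eq_if_card_le[OF W(1)] by simp
qed

lemma normalizer_subset_normalizer_set_mult:
  assumes K: "K \<lhd> G" and S: "subgroup S G"
  shows "normalizer G S \<subseteq> normalizer G (K <#> S)"
proof
  have KS: "subgroup K G" using K normal_imp_subgroup by blast
  fix x assume "x \<in> normalizer G S"
  hence x: "x \<in> carrier G" "conjugate x S = S"
    using normalizer_iff_conjugate_eq[OF subgroup.subset[OF S]] by auto
  have "conjugate x (K <#> S) \<subseteq> K <#> S"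
  proof
    fix y assume "y \<in> conjugate x (K <#> S)"
    then obtain k s where ks: "k \<in> K" "s \<in> S" "y = x \<otimes> (k \<otimes> s) \<otimes> inv x"
      unfolding conjugate_def set_mult_def by blast
    have carr: "k \<in> carrier G" "s \<in> carrier G"
      using subgroup.mem_carrier[OF KS ks(1)] subgroup.mem_carrier[OF S ks(2)] by auto
    have "x \<otimes> k \<otimes> inv x \<in> K" using K x(1) ks(1) normal_inv_iff by blast
    moreover have "x \<otimes> s \<otimes> inv x \<in> S" using conjugate_in_conjugate[OF x(1) ks(2)] x(2) by simp
    moreover have "y = (x \<otimes> k \<otimes> inv x) \<otimes> (x \<otimes> s \<otimes> inv x)"
      using carr x(1) ks(3) by (simp add: m_assoc)
    ultimately show "y \<in> K <#> S" unfolding set_mult_def by blast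
  qed
  thus "x \<in> normalizer G (K <#> S)"
    by (rule mem_normalizer_if_conjugate_subset[OF mult_norm_subgroup[OF K S] x(1)])
qed

lemma normal_subset_normalizer_set_mult:
  assumes K: "K \<lhd> G" and S: "subgroup S G"
  shows "K \<subseteq> normalizer G (K <#> S)"
proof
  have KS: "subgroup K G" using K normal_imp_subgroup by blast
  fix x assume xK: "x \<in> K"
  have x: "x \<in> carrier G" using xK KS subgroup.mem_carrier by metis
  have "conjugate x (K <#> S) \<subseteq> K <#> S"
  proof
    fix y assume "y \<in> conjugate x (K <#> S)"
    then obtain k s where ks: "k \<in> K" "s \<in> S" "y = x \<otimes> (k \<otimes> s) \<otimes> inv x"
      unfolding conjugate_def set_mult_def by blast
    have carr: "k \<in> carrier G" "s \<in> carrier G"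
      using subgroup.mem_carrier[OF KS ks(1)] subgroup.mem_carrier[OF S ks(2)] by auto
    have "s \<otimes> inv x \<otimes> inv s \<in> K" using K carr(2) KS xK subgroup.m_inv_closed normal_inv_iff by metis
    hence "x \<otimes> k \<otimes> (s \<otimes> inv x \<otimes> inv s) \<in> K" using xK ks(1) KS subgroup.m_closed by metis
    moreover have "y = (x \<otimes> k \<otimes> (s \<otimes> inv x \<otimes> inv s)) \<otimes> s" using carr x ks(3) by (simp add: m_assoc)
    ultimately show "y \<in> K <#> S" using ks(2) unfolding set_mult_def by blast
  qed
  thus "x \<in> normalizer G (K <#> S)"
    by (rule mem_normalizer_if_conjugate_subset[OF mult_norm_subgroup[OF K S] x])
qed

lemma eq_carrier_if_supplement_above:
  assumes L: "subgroup L G" "K \<subseteq> L" and supplement: "carrier G \<subseteq> N <#> L"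
    and maximals: "\<And>M. maximal_subgroup M G \<Longrightarrow> K \<subseteq> M \<Longrightarrow> N \<subseteq> M"
  shows "L = carrier G"
proof (rule ccontr)
  assume "L \<noteq> carrier G"
  then obtain M where M: "maximal_subgroup M G" "L \<subseteq> M" using ex_maximal_subgroup_above[OF L(1)] by blast
  have MS: "subgroup M G" and "M \<noteq> carrier G" using M(1) unfolding maximal_subgroup_def by auto
  have "N \<subseteq> M" using maximals M L(2) by blast
  hence "carrier G \<subseteq> M" using set_mult_subset_subgroup[OF MS _ M(2)] supplement by blast
  thus False using \<open>M \<noteq> carrier G\<close> subgroup.subset[OF MS] by blast
qed

text \<open>By the Frattini argument the normalizer of \<open>KS\<close> supplements \<open>N\<close>; as it contains \<open>K\<close>,
  it lies in no maximal subgroup.\<close>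
lemma normal_set_mult_if_maximals_contain:
  assumes K: "K \<lhd> G" and N: "N \<lhd> G" and W: "W \<lhd> G" and S: "subgroup S G" "S \<subseteq> W"
    and r: "Factorial_Ring.prime r" and card_S: "card S = r ^ a"
    and card_W: "card W = r ^ a * m" "\<not> r dvd m" and W_eq: "N <#> S = W"
    and maximals: "\<And>M. maximal_subgroup M G \<Longrightarrow> K \<subseteq> M \<Longrightarrow> N \<subseteq> M"
  shows "K <#> S \<lhd> G"
proof -
  let ?T = "K <#> S"
  have NS: "subgroup N G" using N normal_imp_subgroup by blast
  have TS: "subgroup ?T G" using mult_norm_subgroup[OF K S(1)] .
  have TG: "?T \<subseteq> carrier G" using TS subgroup.subset by blast
  have normalizer_T: "subgroup (normalizer G ?T) G" using normalizer_imp_subgroup[OF TG] .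
  have "carrier G \<subseteq> N <#> normalizer G ?T"
  proof
    fix g assume g: "g \<in> carrier G"
    obtain w where w: "w \<in> W" "inv w \<otimes> g \<in> normalizer G S"
      using Frattini_argument[OF W S r card_S card_W g] by blast
    obtain n s where ns: "n \<in> N" "s \<in> S" "w = n \<otimes> s" using w(1) W_eq unfolding set_mult_def by blast
    have carr: "n \<in> carrier G" "s \<in> carrier G"
      using subgroup.mem_carrier[OF NS ns(1)] subgroup.mem_carrier[OF S(1) ns(2)] by auto
    have "s \<in> normalizer G ?T" "inv w \<otimes> g \<in> normalizer G ?T"
      using ns(2) w(2) subgroup_subset_normalizer[OF S(1)] normalizer_subset_normalizer_set_mult[OF K S(1)]
      by blast+
    hence "s \<otimes> (inv w \<otimes> g) \<in> normalizer G ?T" using subgroup.m_closed[OF normalizer_T] by blast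
    moreover have "g = n \<otimes> (s \<otimes> (inv w \<otimes> g))" using carr g ns(3) by (simp add: m_assoc inv_mult_group)
    ultimately show "g \<in> N <#> normalizer G ?T" using ns(1) unfolding set_mult_def by blast
  qed
  hence "normalizer G ?T = carrier G"
    using eq_carrier_if_supplement_above[OF normalizer_T normal_subset_normalizer_set_mult[OF K S(1)]]
      maximals by blast
  thus ?thesis
    unfolding normal_inv_iff using TS conjugate_in_conjugate normalizer_iff_conjugate_eq[OF TG] by blast
qed

text \<open>Take \<open>W\<close> minimal normal over \<open>N\<close> inside \<open>A\<close>, so \<open>|W : N| = r\<^sup>l\<close> with \<open>r\<close> odd, and a
  Sylow \<open>r\<close>-subgroup \<open>S\<close> of \<open>W = NS\<close>; then \<open>KS\<close> is normal of odd index over \<open>K\<close>.\<close>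
lemma ex_odd_index_normal_over_if_maximals_contain:
  assumes solvable: "solvable G" and K: "K \<lhd> G" and N: "N \<lhd> G" "K \<subseteq> N"
    and card_N: "card N = card K * 2 ^ k"
    and maximals: "\<And>M. maximal_subgroup M G \<Longrightarrow> K \<subseteq> M \<Longrightarrow> N \<subseteq> M"
    and A: "A \<lhd> G" "N \<subset> A" and card_A: "card A = card N * m" and "odd m"
  shows "\<exists>Y. Y \<lhd> G \<and> K \<subset> Y \<and> (\<exists>m. odd m \<and> card Y = card K * m)"
proof -
  have NS: "subgroup N G" and KS: "subgroup K G" and AS: "subgroup A G"
    using N K A normal_imp_subgroup by auto
  obtain W where W_min: "minimal_normal_over N W" and "W \<subseteq> A"
    using ex_minimal_normal_over[OF A] .
  have W: "W \<lhd> G" "N \<subset> W" using W_min unfolding minimal_normal_over_def by blast+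
  have WS: "subgroup W G" using W normal_imp_subgroup by blast
  obtain r l where r: "Factorial_Ring.prime r" and "l > 0" and card_W: "card W = card N * r ^ l"
    using card_minimal_normal_over[OF solvable N(1) W_min] by blast
  obtain t where "card A = card W * t" using card_subgroup_dvd[OF WS AS \<open>W \<subseteq> A\<close>] by blast
  hence "card N * m = card N * (r ^ l * t)" using card_A card_W by (simp add: ac_simps)
  hence "m = r ^ l * t" using card_subgroup_pos[OF NS] by simp
  hence "odd r" using \<open>odd m\<close> \<open>l > 0\<close> by (simp add: dvd_power)
  define a where "a = multiplicity r (card W)"
  obtain m' where m': "card W = r ^ a * m'" "\<not> r dvd m'"
    using multiplicity_decompose'[of "card W" r] card_subgroup_pos[OF WS] r not_prime_unit
    unfolding a_def by (metis less_not_refl2)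
  obtain S where S: "subgroup S G" "S \<subseteq> W" "card S = r ^ a"
    using ex_sylow_subgroup_of_subgroup[OF WS r m'(1)] by blast
  have W_eq: "N <#> S = W" using set_mult_eq_if_sylow[OF N(1) WS _ r card_W m' S] W(2) by blast
  let ?T = "K <#> S"
  have "?T \<lhd> G"
    using normal_set_mult_if_maximals_contain[OF K N(1) W(1) S(1,2) r S(3) m' W_eq maximals] .
  moreover obtain c where card_T: "card ?T = card K * r ^ c"
    using card_set_mult_prime_power[OF KS S(1) r S(3)] .
  moreover have "?T \<noteq> K"
  proof
    assume "?T = K"
    hence "S \<subseteq> K" using subset_set_mult_subgroup_left[OF KS subgroup.subset[OF S(1)]] by simp
    then obtain j where "card K = r ^ a * j" using card_subgroup_dvd[OF S(1) KS] S(3) by auto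
    have "r ^ a * m' = card K * 2 ^ k * r ^ l" using m'(1) card_W card_N by simp
    also have "\<dots> = r ^ a * (j * 2 ^ k * r ^ l)" using \<open>card K = r ^ a * j\<close> by (simp only: ac_simps)
    finally have "m' = j * 2 ^ k * r ^ l" using prime_gt_0_nat[OF r] by simp
    hence "r dvd m'" using \<open>l > 0\<close> by (simp add: dvd_power)
    thus False using m'(2) by blast
  qed
  moreover have "K \<subseteq> ?T" using subset_set_mult_subgroup_right[OF S(1) subgroup.subset[OF KS]] .
  moreover have "odd (r ^ c)" using \<open>odd r\<close> by simp
  ultimately show ?thesis by blast
qed

lemma card_minimal_normal_over_two_power:
  assumes solvable: "solvable G" and K: "K \<lhd> G" and N: "minimal_normal_over K N"
    and no_odd: "\<nexists>Y. Y \<lhd> G \<and> K \<subset> Y \<and> (\<exists>m. odd m \<and> card Y = card K * m)"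
  obtains k where "card N = card K * 2 ^ k"
proof -
  obtain r k where r: "Factorial_Ring.prime r" "k > 0" and card_N: "card N = card K * r ^ k"
    using card_minimal_normal_over[OF solvable K N] by blast
  have "even r"
  proof (rule ccontr)
    assume "odd r"
    hence "odd (r ^ k)" by simp
    thus False using no_odd N card_N unfolding minimal_normal_over_def by blast
  qed
  hence "r = 2" using primes_dvd_imp_eq[OF two_is_prime_nat r(1)] by simp
  thus thesis using that card_N by blast
qed

lemma p'pp'p_series_from_minimal_normal_over:
  assumes solvable: "solvable G"
    and hyp: "\<And>M. maximal_subgroup M G \<Longrightarrow>
      two_nilpotent (G\<lparr>carrier := M\<rparr>) \<or> Factorial_Ring.prime (card (rcosets M))"
    and K: "K \<lhd> G" and N: "minimal_normal_over K N" and card_N: "card N = card K * 2 ^ k"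
    and series_N: "p'pp'p_series_from 2 N"
    and no_odd: "\<nexists>Y. Y \<lhd> G \<and> K \<subset> Y \<and> (\<exists>m. odd m \<and> card Y = card K * m)"
  shows "p'pp'p_series_from 2 K"
proof -
  have NN: "N \<lhd> G" "K \<subset> N" using N unfolding minimal_normal_over_def by blast+
  obtain A B C m kB m' kG where ABC: "A \<lhd> G" "B \<lhd> G" "C \<lhd> G" "N \<subseteq> A" "A \<subseteq> B" "B \<subseteq> C"
    and A: "odd m" "card A = card N * m" and B: "card B = card A * 2 ^ kB"
    and C: "odd m'" "card C = card B * m'" and G: "card (carrier G) = card C * 2 ^ kG"
    using series_N by (rule p'pp'p_series_fromE)
  show ?thesis
  proof (cases "A = N")
    case True
    show ?thesis
      by (rule p'pp'p_series_fromI[OF K ABC(2,3) order_refl _ ABC(6), of 2 1 "k + kB" m' kG])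
        (use True NN(2) ABC(5) B card_N C G in \<open>auto simp: power_add ac_simps\<close>)
  next
    case False
    hence "N \<subset> A" using ABC(4) by blast
    show ?thesis
    proof (cases "\<exists>M. maximal_subgroup M G \<and> K \<subseteq> M \<and> \<not> N \<subseteq> M")
      case True
      then obtain M where M: "maximal_subgroup M G" "K \<subseteq> M" "\<not> N \<subseteq> M" by blast
      show ?thesis
        using hyp[OF M(1)] p'pp'p_series_from_if_two_nilpotent_maximal[OF K NN(1) _ card_N M(1,3)]
          ex_odd_index_normal_over_if_prime_index_maximal[OF K N card_N M _ ABC(1) \<open>N \<subset> A\<close> A(2,1)]
          no_odd NN(2) by blast
    next
      case False
      thus ?thesis
        using ex_odd_index_normal_over_if_maximals_contain[OF solvable K NN(1) _ card_N _ ABC(1)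
            \<open>N \<subset> A\<close> A(2,1)] no_odd NN(2) by blast
    qed
  qed
qed

lemma p'pp'p_series_from_normal:
  assumes solvable: "solvable G"
    and hyp: "\<And>M. maximal_subgroup M G \<Longrightarrow>
      two_nilpotent (G\<lparr>carrier := M\<rparr>) \<or> Factorial_Ring.prime (card (rcosets M))"
    and "K \<lhd> G"
  shows "p'pp'p_series_from 2 K"
  using \<open>K \<lhd> G\<close>
proof (induction "card (carrier G) - card K" arbitrary: K rule: less_induct)
  case less
  have KS: "subgroup K G" using less.prems normal_imp_subgroup by blast
  have IH: "p'pp'p_series_from 2 Y" if "Y \<lhd> G" "K \<subset> Y" for Y
  proof (rule less.hyps[OF _ \<open>Y \<lhd> G\<close>])
    have "card K < card Y" using psubset_card_mono[OF finite_subgroup] that normal_imp_subgroup by blast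
    thus "card (carrier G) - card Y < card (carrier G) - card K"
      using card_subgroup_le that(1) normal_imp_subgroup by (meson diff_less_mono2 order_less_le_trans)
  qed
  show ?case
  proof (cases "K = carrier G")
    case True
    show ?thesis
      by (rule p'pp'p_series_fromI[OF less.prems less.prems less.prems order_refl order_refl order_refl,
            of 2 1 0 1 0]) (use True in simp_all)
  next
    case False
    hence "K \<subset> carrier G" using KS subgroup.subset by blast
    then obtain N where N: "minimal_normal_over K N"
      using ex_minimal_normal_over[OF normal_self] by blast
    have NN: "N \<lhd> G" "K \<subset> N" using N unfolding minimal_normal_over_def by blast+
    show ?thesis
    proof (cases "\<exists>Y. Y \<lhd> G \<and> K \<subset> Y \<and> (\<exists>m. odd m \<and> card Y = card K * m)")
      case True
      then obtain Y m where "Y \<lhd> G" "K \<subset> Y" "odd m" "card Y = card K * m" by blast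
      thus ?thesis using p'pp'p_series_from_subset[OF IH] two_is_prime_nat by blast
    next
      case no_odd: False
      obtain k where "card N = card K * 2 ^ k"
        using card_minimal_normal_over_two_power[OF solvable less.prems N no_odd] .
      thus ?thesis
        using p'pp'p_series_from_minimal_normal_over[OF solvable hyp less.prems N _ IH[OF NN] no_odd]
        by blast
    qed
  qed
qed

end

theorem theoremB:
  fixes G :: "('a, 'b) monoid_scheme"
  assumes "group G"
    and "finite (carrier G)"
    and "solvable G"
    and "\<And>M. maximal_subgroup M G \<Longrightarrow>
            two_nilpotent (G\<lparr>carrier := M\<rparr>) \<or> Factorial_Ring.prime (card (rcosets\<^bsub>G\<^esub> M))"
  shows "O_p'pp'p 2 G = carrier G"
proof -
  interpret finite_group G using assms(1,2) by (simp add: finite_group_def finite_group_axioms_def)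
  have "p'pp'p_series_from 2 {\<one>\<^bsub>G\<^esub>}"
    using p'pp'p_series_from_normal[OF assms(3,4) one_is_normal] .
  thus ?thesis using O_p'pp'p_eq_carrier[OF two_is_prime_nat] by blast
qed

end
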